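(* Let $\mathcal{A}$ be a complex unital $*$-algebra with a fixed generating set $\{a_i : i\in I\}$ closed under the involution, and let $\delta(\mathcal{A})$ be as defined in the context. Let $\mathcal{B}\subseteq\mathcal{C}$ be $*$-invariant linear subspaces of $\mathcal{A}$, both connected to $1$, and let $m\ge 1$ be an integer with $\mathcal{B}^{[m]}\subseteq\mathcal{C}$ and $2m\ge\delta(\mathcal{A})$. Let $L$ be a hermitian linear functional on $\mathcal{C}^2$ which is a flat extension with respect to $\mathcal{B}$, i.e. $\mathcal{C}=\mathcal{B}+K_L(\mathcal{C})$. Then: (1) There exists a unique hermitian linear functional $\mathcal{L}$ on $\mathcal{A}$ extending $L$ such that $\mathcal{A}=\mathcal{C}+K_{\mathcal{L}}(\mathcal{A})$ (equivalently, such that $\mathcal{A}=\mathcal{B}+K_{\mathcal{L}}(\mathcal{A})$). (2) Let $\mathcal{B}'\subseteq\mathcal{B}$ be any linear subspace with $1\in\mathcal{B}'$ and $\mathcal{C}=\mathcal{B}'\oplus K_L(\mathcal{C})$ (direct sum of vector spaces); such a choice is possible unless $L\equiv 0$. Then $\mathcal{A}=\mathcal{B}'\oplus K_{\mathcal{L}}(\mathcal{A})$, the form $\langle\cdot,\cdot\rangle_{\mathcal{L}}$ is non-degenerate on $\mathcal{B}'$, and the projection of $\mathcal{C}$ onto $\mathcal{B}'$ along $K_L(\mathcal{C})$ extends to the projection $\pi_{\mathcal{L}}:\mathcal{A}\to\mathcal{B}'$ along $K_{\mathcal{L}}(\mathcal{A})$. The formula $\rho_{\mathcal{L}}(a)b=\pi_{\mathcal{L}}(ab)$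 ($a\in\mathcal{A}$, $b\in\mathcal{B}'$) defines a $*$-representation $\rho_{\mathcal{L}}$ of $\mathcal{A}$ on $(\mathcal{B}',\langle\cdot,\cdot\rangle_{\mathcal{L}})$ with $\mathcal{L}(a)=\langle\rho_{\mathcal{L}}(a)1,1\rangle_{\mathcal{L}}$ for all $a\in\mathcal{A}$. (3) If moreover $L$ is positive on $\mathcal{C}^2$, then $\mathcal{L}$ is a positive linear functional on $\mathcal{A}$ and $\langle\cdot,\cdot\rangle_{\mathcal{L}}$ is a scalar product (positive definite) on $\mathcal{B}'$.
   Context: $\mathcal{A}$ is a complex unital $*$-algebra with unit $1$. For a $*$-invariant linear subspace $\mathcal{C}\ni 1$ of $\mathcal{A}$, $\mathcal{C}^2:=\mathrm{Lin}\{ab: a,b\in\mathcal{C}\}$. A linear functional $L$ on a $*$-invariant subspace is hermitian if $L(b^* )=\overline{L(b)}$. For hermitian $L$ on $\mathcal{C}^2$, put $\langle a,b\rangle_L:=L(b^*a)$ for $a,b\in\mathcal{C}$ and $K_L(\mathcal{C}):=\{a\in\mathcal{C}:\langle a,b\rangle_L=0\ \forall b\in\mathcal{C}\}$. $L$ is positive if $L(a^*a)\ge 0$ for all $a\in\mathcal{C}$. For $\mathcal{B}\subseteq\mathcal{C}$ both $*$-invariant with $1\in\mathcal{B}$, a hermitian $L$ on $\mathcal{C}^2$ is a flat extension with respect to $\mathcal{B}$ if $\mathcal{C}=\mathcal{B}+K_L(\mathcal{C})$. A $*$-representation of $\mathcal{A}$ on a vector space $V$ with hermitian sesquilinear form $\langle\cdot,\cdot\rangle$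 is an algebra homomorphism $\rho$ from $\mathcal{A}$ into linear operators on $V$ with $\rho(1)=I$ and $\langle\rho(a)v,w\rangle=\langle v,\rho(a^* )w\rangle$. Fix generators $\{a_i:i\in I\}$ of $\mathcal{A}$ such that for each $i$ there is $j$ with $a_i^*=a_j$. For a subspace $V\subseteq\mathcal{A}$, its prolongation is $V^+:=V+\mathrm{Lin}\{a_iv: i\in I, v\in V\}$; $V^{[0]}=V$, $V^{[l+1]}=(V^{[l]})^+$. $V$ is connected to $1$ if $1\in V$ and there are subspaces $\mathbb{C}\cdot 1=V_0\subseteq V_1\subseteq\cdots\subseteq V$ with $\bigcup_l V_l=V$ and $V_{l+1}\subseteq V_l^+$. Let $\mathcal{F}=\mathbb{C}\langle x_i:i\in I\rangle$ be the free unital $*$-algebra with $x_i^*=x_j$ whenever $a_i^*=a_j$, and $\sigma:\mathcal{F}\to\mathcal{A}$ the $*$-homomorphism with $\sigma(x_i)=a_i$; $\mathcal{I}=\ker\sigma$. The index of $p\in\mathcal{F}$ is the smallest $l$ such that $p$ is a linear combination of words of length $\le l$ in the $x_i$. For a set $S$ generating $\mathcal{I}$ as a two-sided ideal, $\delta(S)\in\mathbb{N}\cup\{\infty\}$ is the maximal index of elements of $S$, and $\delta(\mathcal{A})$ is the minimum of $\delta(S)$ over all such $S$. *)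

theory Defs
  imports Complex_Main "HOL-Library.Extended_Nat" "HOL-Library.Complex_Order"
begin

text \<open>A complex unital *-algebra is modelled as a type of class ring_1 together with a
complex scalar multiplication sm (making it a complex vector space, compatible with the
ring multiplication) and an involution st (conjugate linear, anti-multiplicative).\<close>

definition star_algebra :: "(complex \<Rightarrow> 'a::ring_1 \<Rightarrow> 'a) \<Rightarrow> ('a \<Rightarrow> 'a) \<Rightarrow> bool" where
  "star_algebra sm st \<longleftrightarrow>
     vector_space sm \<and>
     (\<forall>c a b. sm c (a * b) = sm c a * b \<and> sm c (a * b) = a * sm c b) \<and>
     (\<forall>a b. st (a + b) = st a + st b) \<and>
     (\<forall>c a. st (sm c a) = sm (cnj c) (st a)) \<and>
     (\<forall>a b. st (a * b) = st b * st a) \<and>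
     (\<forall>a. st (st a) = a)"

definition star_inv :: "('a \<Rightarrow> 'a) \<Rightarrow> 'a set \<Rightarrow> bool" where
  "star_inv st V \<longleftrightarrow> (\<forall>a\<in>V. st a \<in> V)"

definition setplus :: "'a::plus set \<Rightarrow> 'a set \<Rightarrow> 'a set" where
  "setplus U W = {u + w | u w. u \<in> U \<and> w \<in> W}"

definition direct_sum :: "'a::{plus,zero} set \<Rightarrow> 'a set \<Rightarrow> 'a set \<Rightarrow> bool" where
  "direct_sum U W V \<longleftrightarrow> setplus U W = V \<and> U \<inter> W = {0}"

definition proj :: "'a::minus set \<Rightarrow> 'a set \<Rightarrow> 'a \<Rightarrow> 'a" where
  "proj U W x = (THE u. u \<in> U \<and> x - u \<in> W)"

definition word_prod :: "('i \<Rightarrow> 'a::monoid_mult) \<Rightarrow> 'i list \<Rightarrow> 'a" where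
  "word_prod gen w = foldr (\<lambda>i x. gen i * x) w 1"

definition generates :: "(complex \<Rightarrow> 'a::ring_1 \<Rightarrow> 'a) \<Rightarrow> ('i \<Rightarrow> 'a) \<Rightarrow> 'i set \<Rightarrow> bool" where
  "generates sm gen I \<longleftrightarrow> module.span sm {word_prod gen w | w. set w \<subseteq> I} = UNIV"

definition prol :: "(complex \<Rightarrow> 'a::ring_1 \<Rightarrow> 'a) \<Rightarrow> ('i \<Rightarrow> 'a) \<Rightarrow> 'i set \<Rightarrow> 'a set \<Rightarrow> 'a set" where
  "prol sm gen I V = setplus V (module.span sm {gen i * v | i v. i \<in> I \<and> v \<in> V})"

definition connected_to_1 :: "(complex \<Rightarrow> 'a::ring_1 \<Rightarrow> 'a) \<Rightarrow> ('i \<Rightarrow> 'a) \<Rightarrow> 'i set \<Rightarrow> 'a set \<Rightarrow> bool" where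
  "connected_to_1 sm gen I V \<longleftrightarrow> 1 \<in> V \<and>
     (\<exists>Vs :: nat \<Rightarrow> 'a set. Vs 0 = module.span sm {1} \<and>
        (\<forall>l. module.subspace sm (Vs l) \<and> Vs l \<subseteq> Vs (Suc l) \<and> Vs (Suc l) \<subseteq> prol sm gen I (Vs l)) \<and>
        (\<Union>l. Vs l) = V)"

text \<open>Elements of the free algebra on the letters x_i (i in I) are represented by their
coefficient functions on words: finitely supported maps from words to complex numbers.\<close>

definition fpoly :: "'i set \<Rightarrow> ('i list \<Rightarrow> complex) set" where
  "fpoly I = {p. finite {w. p w \<noteq> 0} \<and> (\<forall>w. p w \<noteq> 0 \<longrightarrow> set w \<subseteq> I)}"

definition fsigma :: "(complex \<Rightarrow> 'a::ring_1 \<Rightarrow> 'a) \<Rightarrow> ('i \<Rightarrow> 'a) \<Rightarrow> ('i list \<Rightarrow> complex) \<Rightarrow> 'a" where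
  "fsigma sm gen p = (\<Sum>w\<in>{w. p w \<noteq> 0}. sm (p w) (word_prod gen w))"

definition fker :: "(complex \<Rightarrow> 'a::ring_1 \<Rightarrow> 'a) \<Rightarrow> ('i \<Rightarrow> 'a) \<Rightarrow> 'i set \<Rightarrow> ('i list \<Rightarrow> complex) set" where
  "fker sm gen I = {p \<in> fpoly I. fsigma sm gen p = 0}"

definition flmul :: "'i \<Rightarrow> ('i list \<Rightarrow> complex) \<Rightarrow> ('i list \<Rightarrow> complex)" where
  "flmul i p = (\<lambda>w. case w of [] \<Rightarrow> 0 | j # v \<Rightarrow> if j = i then p v else 0)"

definition frmul :: "'i \<Rightarrow> ('i list \<Rightarrow> complex) \<Rightarrow> ('i list \<Rightarrow> complex)" where
  "frmul i p = (\<lambda>w. if w \<noteq> [] \<and> last w = i then p (butlast w) else 0)"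

inductive_set fideal :: "'i set \<Rightarrow> ('i list \<Rightarrow> complex) set \<Rightarrow> ('i list \<Rightarrow> complex) set"
  for I S where
  gen: "s \<in> S \<Longrightarrow> s \<in> fideal I S"
| zero: "(\<lambda>_. 0) \<in> fideal I S"
| add: "p \<in> fideal I S \<Longrightarrow> q \<in> fideal I S \<Longrightarrow> (\<lambda>w. p w + q w) \<in> fideal I S"
| smult: "p \<in> fideal I S \<Longrightarrow> (\<lambda>w. c * p w) \<in> fideal I S"
| lmul: "i \<in> I \<Longrightarrow> p \<in> fideal I S \<Longrightarrow> flmul i p \<in> fideal I S"
| rmul: "i \<in> I \<Longrightarrow> p \<in> fideal I S \<Longrightarrow> frmul i p \<in> fideal I S"

definition findex :: "('i list \<Rightarrow> complex) \<Rightarrow> nat" where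
  "findex p = (if (\<forall>w. p w = 0) then 0 else Max {length w | w. p w \<noteq> 0})"

definition delta_set :: "('i list \<Rightarrow> complex) set \<Rightarrow> enat" where
  "delta_set S = (SUP s\<in>S. enat (findex s))"

definition delta_alg :: "(complex \<Rightarrow> 'a::ring_1 \<Rightarrow> 'a) \<Rightarrow> ('i \<Rightarrow> 'a) \<Rightarrow> 'i set \<Rightarrow> enat" where
  "delta_alg sm gen I =
     (INF S\<in>{S. S \<subseteq> fpoly I \<and> fideal I S = fker sm gen I}. delta_set S)"

definition sq :: "(complex \<Rightarrow> 'a::ring_1 \<Rightarrow> 'a) \<Rightarrow> 'a set \<Rightarrow> 'a set" where
  "sq sm C = module.span sm {a * b | a b. a \<in> C \<and> b \<in> C}"

definition lin_on :: "(complex \<Rightarrow> 'a::ring_1 \<Rightarrow> 'a) \<Rightarrow> 'a set \<Rightarrow> ('a \<Rightarrow> complex) \<Rightarrow> bool" where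
  "lin_on sm V L \<longleftrightarrow> (\<forall>a\<in>V. \<forall>b\<in>V. L (a + b) = L a + L b) \<and> (\<forall>c. \<forall>a\<in>V. L (sm c a) = c * L a)"

definition herm_on :: "(complex \<Rightarrow> 'a::ring_1 \<Rightarrow> 'a) \<Rightarrow> ('a \<Rightarrow> 'a) \<Rightarrow> 'a set \<Rightarrow> ('a \<Rightarrow> complex) \<Rightarrow> bool" where
  "herm_on sm st V L \<longleftrightarrow> lin_on sm V L \<and> (\<forall>b\<in>V. L (st b) = cnj (L b))"

definition form :: "('a::times \<Rightarrow> complex) \<Rightarrow> ('a \<Rightarrow> 'a) \<Rightarrow> 'a \<Rightarrow> 'a \<Rightarrow> complex" where
  "form L st a b = L (st b * a)"

definition kerL :: "('a::times \<Rightarrow> 'a) \<Rightarrow> ('a \<Rightarrow> complex) \<Rightarrow> 'a set \<Rightarrow> 'a set" where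
  "kerL st L C = {a \<in> C. \<forall>b\<in>C. form L st a b = 0}"

definition positive_on :: "('a::times \<Rightarrow> 'a) \<Rightarrow> 'a set \<Rightarrow> ('a \<Rightarrow> complex) \<Rightarrow> bool" where
  "positive_on st C L \<longleftrightarrow> (\<forall>a\<in>C. 0 \<le> L (st a * a))"

definition flat_ext :: "('a::{plus,times} \<Rightarrow> 'a) \<Rightarrow> ('a \<Rightarrow> complex) \<Rightarrow> 'a set \<Rightarrow> 'a set \<Rightarrow> bool" where
  "flat_ext st L B C \<longleftrightarrow> C = setplus B (kerL st L C)"

text \<open>*-representation of the algebra on the space V with hermitian form f; operators are
functions on the whole type, considered on V only.\<close>
definition star_rep :: "(complex \<Rightarrow> 'a::ring_1 \<Rightarrow> 'a) \<Rightarrow> ('a \<Rightarrow> 'a) \<Rightarrow> 'a set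
     \<Rightarrow> ('a \<Rightarrow> 'a \<Rightarrow> complex) \<Rightarrow> ('a \<Rightarrow> 'a \<Rightarrow> 'a) \<Rightarrow> bool" where
  "star_rep sm st V f \<rho> \<longleftrightarrow>
     (\<forall>a. \<forall>v\<in>V. \<rho> a v \<in> V) \<and>
     (\<forall>a. \<forall>v\<in>V. \<forall>w\<in>V. \<rho> a (v + w) = \<rho> a v + \<rho> a w) \<and>
     (\<forall>a c. \<forall>v\<in>V. \<rho> a (sm c v) = sm c (\<rho> a v)) \<and>
     (\<forall>a b. \<forall>v\<in>V. \<rho> (a + b) v = \<rho> a v + \<rho> b v) \<and>
     (\<forall>a c. \<forall>v\<in>V. \<rho> (sm c a) v = sm c (\<rho> a v)) \<and>
     (\<forall>a b. \<forall>v\<in>V. \<rho> (a * b) v = \<rho> a (\<rho> b v)) \<and>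
     (\<forall>v\<in>V. \<rho> 1 v = v) \<and>
     (\<forall>a. \<forall>v\<in>V. \<forall>w\<in>V. f (\<rho> a v) w = f v (\<rho> (st a) w))"

end

(* Since B^[1] \<subseteq> C, the prolongation K^+ meets C only inside K.
    As C is connected to 1, this forces L = 0 on C^2 as soon as 1 \<in> K; otherwise K has a
    complement B' in C with 1 \<in> B' \<subseteq> B.  Let \<pi> be the projection of C onto B' along K.  A word
    x_{i_1}...x_{i_k} acts on B' by v \<mapsto> \<pi>(a_{i_1} \<pi>(... \<pi>(a_{i_k} v))), polynomials act linearly.
    For words u of length \<le> 2m we get L(w^* (u.v)) = L(w^* u v), by splitting u into two halves
    of length \<le> m; as \<langle>,\<rangle>_L is non-degenerate on B', relations of index \<le> 2m act by 0, hence
    (since 2m \<ge> \<delta>(A)) the whole kernel of the free algebra does, and the action descends to a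
    *-representation \<rho> of A on B'.
  Step 3.  \<LL>(a) = L(\<rho>(a) 1) extends L; it is flat because a - \<rho>(a) 1 \<in> K_\<LL>(A), unique because
    the kernel of every flat extension contains these residuals, and positive by Cauchy-Schwarz. *)

theory Submission
  imports Defs
begin

lemma word_prod_Nil: "word_prod gen [] = 1"
  unfolding word_prod_def by simp

lemma word_prod_Cons: "word_prod gen (i # w) = gen i * word_prod gen w"
  unfolding word_prod_def by simp

lemma word_prod_append: "word_prod gen (u @ w) = word_prod gen u * word_prod gen w"
  by (induction u) (auto simp: word_prod_Nil word_prod_Cons mult.assoc)

lemma (in module) proj_unique:
  assumes U: "subspace U" and W: "subspace W" and UW: "U \<inter> W = {0}"
    and u: "u \<in> U" and xu: "x - u \<in> W"
  shows "proj U W x = u"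
  unfolding proj_def
proof (rule the_equality)
  show "u \<in> U \<and> x - u \<in> W" using u xu by simp
  fix u' assume u': "u' \<in> U \<and> x - u' \<in> W"
  have "u' - u \<in> U" using u u' subspace_diff[OF U] by blast
  moreover have "u' - u = (x - u) - (x - u')" by simp
  hence "u' - u \<in> W" using xu u' subspace_diff[OF W] by metis
  ultimately have "u' - u = 0" using UW by blast
  thus "u' = u" by simp
qed

lemma (in vector_space) span_complement_disjoint:
  assumes T: "independent T" and S: "S \<subseteq> T"
  shows "span (T - S) \<inter> span S = {0}"
proof safe
  fix y assume y: "y \<in> span (T - S)" "y \<in> span S"
  obtain f where f: "{v. f v \<noteq> 0} \<subseteq> T - S" "finite {v. f v \<noteq> 0}"
    and yf: "y = (\<Sum>v | f v \<noteq> 0. f v *s v)"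
    using y(1) unfolding span_alt by blast
  obtain g where g: "{v. g v \<noteq> 0} \<subseteq> S" "finite {v. g v \<noteq> 0}"
    and yg: "y = (\<Sum>v | g v \<noteq> 0. g v *s v)"
    using y(2) unfolding span_alt by blast
  have "f = g" by (rule unique_representation[OF T]) (use f g S yf yg in auto)
  hence "{v. f v \<noteq> 0} = {}" using f g by auto
  thus "y = 0" using yf by simp
qed (auto simp: span_zero)

text \<open>Inside a subspace B, every vector x outside a subspace W \<subseteq> B lies in a complement
  of W in B.  This produces the space B' of the theorem.\<close>
lemma (in vector_space) complement_containing:
  assumes B: "subspace B" and W: "subspace W" and WB: "W \<subseteq> B"
    and x: "x \<in> B" "x \<notin> W"
  obtains B' where "subspace B'" "B' \<subseteq> B" "x \<in> B'" "B' \<inter> W = {0}" "B \<subseteq> setplus B' W"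
proof -
  obtain S where S: "S \<subseteq> W" "independent S" "W \<subseteq> span S"
    using maximal_independent_subset by blast
  have spanS: "span S = W" using S W span_minimal span_subspace by (metis subset_antisym span_mono)
  have ind: "independent (insert x S)" using x S(2) spanS independent_insertI by blast
  obtain T where T: "insert x S \<subseteq> T" "T \<subseteq> B" "independent T" "B \<subseteq> span T"
    using maximal_independent_subset_extend[OF _ ind, of B] S(1) WB x by blast
  define B' where "B' = span (T - S)"
  have "B' \<subseteq> B" unfolding B'_def using T(2) B span_minimal by blast
  moreover have "x \<in> B'" unfolding B'_def using T(1) x spanS span_superset by (intro span_base) blast
  moreover have "B' \<inter> W = {0}"
    using span_complement_disjoint[OF T(3), of S] T(1) spanS unfolding B'_def by blast
  moreover have "B \<subseteq> setplus B' W"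
  proof
    fix b assume "b \<in> B"
    hence "b \<in> span ((T - S) \<union> S)" using T(4) T(1) by (metis Un_Diff_cancel2 insert_subset sup.absorb1 subsetD)
    then obtain y1 y2 where "y1 \<in> B'" "y2 \<in> W" "b = y1 + y2"
      unfolding span_Un B'_def spanS by blast
    thus "b \<in> setplus B' W" unfolding setplus_def by blast
  qed
  ultimately show ?thesis using that unfolding B'_def by (meson subspace_span)
qed

lemma (in module) sum_additive_on:
  assumes U: "subspace U" and hadd: "\<And>x y. x \<in> U \<Longrightarrow> y \<in> U \<Longrightarrow> h (x + y) = h x + h y"
    and h0: "h 0 = 0" and fin: "finite A" and fU: "\<And>a. a \<in> A \<Longrightarrow> g a \<in> U"
  shows "h (\<Sum>a\<in>A. g a) = (\<Sum>a\<in>A. h (g a))"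
  using fin fU
proof (induction A rule: finite_induct)
  case (insert a A)
  have "(\<Sum>a\<in>A. g a) \<in> U" using insert U by (auto intro: subspace_sum)
  thus ?case using insert hadd by simp
qed (use h0 in simp)

text \<open>A complex number z with |z|^2 (t^2 G - 2t) \<ge> 0 for all t > 0, where G \<ge> 0, vanishes;
  this is the core of the Cauchy-Schwarz argument used for positivity.\<close>
lemma complex_zero_by_quadratic_bound:
  fixes z G :: complex
  assumes G: "Im G = 0" "Re G \<ge> 0"
    and h: "\<And>t::real. t > 0 \<Longrightarrow> 0 \<le> Re (z * cnj z) * (t^2 * Re G - 2 * t)"
  shows "z = 0"
proof -
  let ?n = "Re (z * cnj z)"
  have n: "?n = (cmod z)^2" using complex_norm_square[of z] by (metis Re_complex_of_real)
  define t where "t = 1 / (Re G + 1)"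
  have t: "t > 0" using G unfolding t_def by simp
  have "t * Re G < 1" unfolding t_def using G by (simp add: field_simps)
  hence neg: "t^2 * Re G - 2 * t < 0" using t by (simp add: power2_eq_square algebra_simps)
  have "0 \<le> ?n * (t^2 * Re G - 2 * t)" using h t by blast
  hence "?n \<le> 0" using neg by (simp add: mult_le_0_iff zero_le_mult_iff)
  hence "cmod z = 0" using n by simp
  thus ?thesis by simp
qed


subsection \<open>Polynomials of the free algebra as coefficient functions\<close>

lemma fpoly_fin: "p \<in> fpoly I \<Longrightarrow> finite {w. p w \<noteq> 0}"
  unfolding fpoly_def by auto

lemma fpoly_letters: "p \<in> fpoly I \<Longrightarrow> p w \<noteq> 0 \<Longrightarrow> set w \<subseteq> I"
  unfolding fpoly_def by auto

lemma fpoly_add: "p \<in> fpoly I \<Longrightarrow> q \<in> fpoly I \<Longrightarrow> (\<lambda>w. p w + q w) \<in> fpoly I"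
proof -
  assume p: "p \<in> fpoly I" and q: "q \<in> fpoly I"
  have "{w. p w + q w \<noteq> 0} \<subseteq> {w. p w \<noteq> 0} \<union> {w. q w \<noteq> 0}" by auto
  moreover have "finite ({w. p w \<noteq> 0} \<union> {w. q w \<noteq> 0})" using p q fpoly_fin by blast
  ultimately have "finite {w. p w + q w \<noteq> 0}" by (rule finite_subset)
  moreover have "\<forall>w. p w + q w \<noteq> 0 \<longrightarrow> set w \<subseteq> I"
    using p q fpoly_letters by (metis add.right_neutral add_0)
  ultimately show ?thesis unfolding fpoly_def by simp
qed

lemma fpoly_smult: "p \<in> fpoly I \<Longrightarrow> (\<lambda>w. c * p w) \<in> fpoly I"
  unfolding fpoly_def by (auto intro: finite_subset[of _ "{w. p w \<noteq> 0}"])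

lemma fpoly_zero: "(\<lambda>_. 0) \<in> fpoly I"
  unfolding fpoly_def by auto

lemma fpoly_monomial: "set w \<subseteq> I \<Longrightarrow> (\<lambda>u. if u = w then 1 else 0) \<in> fpoly I"
  unfolding fpoly_def by auto

lemma supp_flmul: "{w. flmul i p w \<noteq> 0} = (Cons i) ` {w. p w \<noteq> 0}"
proof (rule set_eqI, rule iffI)
  fix x assume x: "x \<in> {w. flmul i p w \<noteq> 0}"
  then obtain j v where "x = j # v" unfolding flmul_def by (cases x) auto
  with x have "x = i # v" "p v \<noteq> 0" unfolding flmul_def by (auto split: if_splits)
  thus "x \<in> (Cons i) ` {w. p w \<noteq> 0}" by blast
qed (auto simp: flmul_def)

lemma supp_frmul: "{w. frmul i p w \<noteq> 0} = (\<lambda>w. w @ [i]) ` {w. p w \<noteq> 0}"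
proof (rule set_eqI, rule iffI)
  fix x assume "x \<in> {w. frmul i p w \<noteq> 0}"
  hence x: "x \<noteq> []" "last x = i" "p (butlast x) \<noteq> 0" unfolding frmul_def by (auto split: if_splits)
  hence "x = butlast x @ [i]" by (metis append_butlast_last_id)
  thus "x \<in> (\<lambda>w. w @ [i]) ` {w. p w \<noteq> 0}" using x(3) by blast
qed (auto simp: frmul_def)

lemma fpoly_flmul: "i \<in> I \<Longrightarrow> p \<in> fpoly I \<Longrightarrow> flmul i p \<in> fpoly I"
proof -
  assume i: "i \<in> I" and p: "p \<in> fpoly I"
  have "set w \<subseteq> I" if nz: "flmul i p w \<noteq> 0" for w
  proof -
    have "w \<in> {w. flmul i p w \<noteq> 0}" using nz by simp
    then obtain v where "w = i # v" "p v \<noteq> 0" unfolding supp_flmul by blast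
    thus ?thesis using fpoly_letters[OF p] i by auto
  qed
  thus ?thesis using fpoly_fin[OF p] unfolding fpoly_def by (simp add: supp_flmul)
qed

lemma fpoly_frmul: "i \<in> I \<Longrightarrow> p \<in> fpoly I \<Longrightarrow> frmul i p \<in> fpoly I"
proof -
  assume i: "i \<in> I" and p: "p \<in> fpoly I"
  have "set w \<subseteq> I" if nz: "frmul i p w \<noteq> 0" for w
  proof -
    have "w \<in> {w. frmul i p w \<noteq> 0}" using nz by simp
    then obtain v where "w = v @ [i]" "p v \<noteq> 0" unfolding supp_frmul by blast
    thus ?thesis using fpoly_letters[OF p] i by auto
  qed
  thus ?thesis using fpoly_fin[OF p] unfolding fpoly_def by (simp add: supp_frmul)
qed

lemma findex_ge: assumes s: "s \<in> fpoly I" and u: "s u \<noteq> 0" shows "length u \<le> findex s"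
proof -
  have fin: "finite {length w | w. s w \<noteq> 0}"
    using fpoly_fin[OF s] by (simp add: setcompr_eq_image)
  have "findex s = Max {length w | w. s w \<noteq> 0}" using u unfolding findex_def by auto
  thus ?thesis using Max_ge[OF fin] u by auto
qed

lemma delta_alg_bound:
  assumes "delta_alg sm gen I \<le> enat n"
  obtains S where "S \<subseteq> fpoly I" "fideal I S = fker sm gen I"
    "\<And>s u. s \<in> S \<Longrightarrow> s u \<noteq> 0 \<Longrightarrow> length u \<le> n"
proof -
  let ?X = "{S. S \<subseteq> fpoly I \<and> fideal I S = fker sm gen I}"
  have d: "Inf (delta_set ` ?X) \<le> enat n" using assms unfolding delta_alg_def by simp
  have "delta_set ` ?X \<noteq> {}"
  proof
    assume "delta_set ` ?X = {}"
    hence "Inf (delta_set ` ?X) = \<infinity>" by (simp add: Inf_enat_def)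
    thus False using d by simp
  qed
  hence "Inf (delta_set ` ?X) \<in> delta_set ` ?X"
    unfolding Inf_enat_def using LeastI_ex[of "\<lambda>x. x \<in> delta_set ` ?X"] by (simp only: if_False) blast
  then obtain S where S: "S \<in> ?X" and dS: "delta_set S \<le> enat n" using d by force
  have "findex s \<le> n" if "s \<in> S" for s using dS that unfolding delta_set_def by (simp add: SUP_le_iff)
  moreover have "S \<subseteq> fpoly I" "fideal I S = fker sm gen I" using S by auto
  ultimately show ?thesis using that findex_ge by (meson order_trans subsetD)
qed

definition (in module) coeff_sum :: "('w \<Rightarrow> 'b) \<Rightarrow> ('w \<Rightarrow> 'a) \<Rightarrow> 'b" where
  "coeff_sum f p = (\<Sum>w | p w \<noteq> 0. p w *s f w)"

context module
begin

lemma coeff_sum_superset: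
  "finite U \<Longrightarrow> {w. p w \<noteq> 0} \<subseteq> U \<Longrightarrow> coeff_sum f p = (\<Sum>w\<in>U. p w *s f w)"
  unfolding coeff_sum_def by (rule sum.mono_neutral_left) auto

lemma coeff_sum_add:
  assumes "finite {w. p w \<noteq> 0}" "finite {w. q w \<noteq> 0}"
  shows "coeff_sum f (\<lambda>w. p w + q w) = coeff_sum f p + coeff_sum f q"
proof -
  let ?U = "{w. p w \<noteq> 0} \<union> {w. q w \<noteq> 0}"
  have "coeff_sum f (\<lambda>w. p w + q w) = (\<Sum>w\<in>?U. (p w + q w) *s f w)"
    "coeff_sum f p = (\<Sum>w\<in>?U. p w *s f w)" "coeff_sum f q = (\<Sum>w\<in>?U. q w *s f w)"
    by (rule coeff_sum_superset, use assms in auto)+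
  thus ?thesis by (simp add: scale_left_distrib sum.distrib)
qed

lemma coeff_sum_smult:
  assumes "finite {w. p w \<noteq> 0}"
  shows "coeff_sum f (\<lambda>w. c * p w) = c *s coeff_sum f p"
proof -
  have "coeff_sum f (\<lambda>w. c * p w) = (\<Sum>w\<in>{w. p w \<noteq> 0}. (c * p w) *s f w)"
    by (rule coeff_sum_superset) (use assms in auto)
  thus ?thesis unfolding coeff_sum_def by (simp add: scale_sum_right)
qed

lemma coeff_sum_zero: "coeff_sum f (\<lambda>_. 0) = 0"
  unfolding coeff_sum_def by simp

lemma coeff_sum_monomial: "coeff_sum f (\<lambda>u. if u = w then 1 else 0) = f w"
proof -
  have "{u. (if u = w then 1 else 0) \<noteq> (0::'a)} = {w}" by auto
  thus ?thesis unfolding coeff_sum_def by simp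
qed

lemma coeff_sum_in: "subspace U \<Longrightarrow> (\<And>w. p w \<noteq> 0 \<Longrightarrow> f w \<in> U) \<Longrightarrow> coeff_sum f p \<in> U"
  unfolding coeff_sum_def by (rule subspace_sum) (auto intro: subspace_scale)

lemma coeff_sum_linear_on:
  assumes U: "subspace U" and hadd: "\<And>x y. x \<in> U \<Longrightarrow> y \<in> U \<Longrightarrow> h (x + y) = h x + h y"
    and hsm: "\<And>c x. x \<in> U \<Longrightarrow> h (c *s x) = c *s h x"
    and fin: "finite {w. p w \<noteq> 0}" and fU: "\<And>w. p w \<noteq> 0 \<Longrightarrow> f w \<in> U"
  shows "h (coeff_sum f p) = coeff_sum (\<lambda>w. h (f w)) p"
proof -
  have "h 0 = 0" using hsm[of 0 0] subspace_0[OF U] by simp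
  hence "h (coeff_sum f p) = (\<Sum>w | p w \<noteq> 0. h (p w *s f w))"
    unfolding coeff_sum_def by (intro sum_additive_on[OF U hadd]) (auto intro: subspace_scale[OF U] fin fU)
  also have "\<dots> = coeff_sum (\<lambda>w. h (f w)) p" unfolding coeff_sum_def by (rule sum.cong) (auto simp: hsm fU)
  finally show ?thesis .
qed

lemma coeff_sum_functional_on:
  assumes U: "subspace U" and hadd: "\<And>x y. x \<in> U \<Longrightarrow> y \<in> U \<Longrightarrow> h (x + y) = h x + h y"
    and hsm: "\<And>c x. x \<in> U \<Longrightarrow> h (c *s x) = c * h x"
    and fin: "finite {w. p w \<noteq> 0}" and fU: "\<And>w. p w \<noteq> 0 \<Longrightarrow> f w \<in> U"
  shows "h (coeff_sum f p) = (\<Sum>w | p w \<noteq> 0. p w * h (f w))"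
proof -
  have "h 0 = 0" using hsm[of 0 0] subspace_0[OF U] by simp
  hence "h (coeff_sum f p) = (\<Sum>w | p w \<noteq> 0. h (p w *s f w))"
    unfolding coeff_sum_def by (intro sum_additive_on[OF U hadd]) (auto intro: subspace_scale[OF U] fin fU)
  also have "\<dots> = (\<Sum>w | p w \<noteq> 0. p w * h (f w))" by (rule sum.cong) (auto simp: hsm fU)
  finally show ?thesis .
qed

end

locale star_alg = vector_space sm for sm :: "complex \<Rightarrow> 'a::ring_1 \<Rightarrow> 'a" +
  fixes st :: "'a \<Rightarrow> 'a"
  assumes sm_ml: "\<And>c a b. sm c (a * b) = sm c a * b"
    and sm_mr: "\<And>c a b. sm c (a * b) = a * sm c b"
    and st_add: "\<And>a b. st (a + b) = st a + st b"
    and st_sm: "\<And>c a. st (sm c a) = sm (cnj c) (st a)"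
    and st_mult: "\<And>a b. st (a * b) = st b * st a"
    and st_st: "\<And>a. st (st a) = a"
begin

lemma st_1 [simp]: "st 1 = 1"
  by (metis mult_1_left mult_1_right st_mult st_st)

lemma st_0 [simp]: "st 0 = 0"
  by (metis add_cancel_right_right st_add)

lemma st_diff: "st (a - b) = st a - st b"
  by (metis add_diff_cancel diff_add_cancel st_add)

lemma coeff_sum_flmul: "coeff_sum f (flmul i p) = coeff_sum (\<lambda>w. f (i # w)) p"
  unfolding coeff_sum_def supp_flmul by (subst sum.reindex) (auto simp: flmul_def)

lemma coeff_sum_frmul: "coeff_sum f (frmul i p) = coeff_sum (\<lambda>w. f (w @ [i])) p"
proof -
  have inj: "inj_on (\<lambda>w. w @ [i]) X" for X by (auto simp: inj_on_def)
  show ?thesis unfolding coeff_sum_def supp_frmul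
    by (subst sum.reindex[OF inj]) (auto simp: frmul_def)
qed

lemma kernel_iff: "a \<in> kerL st \<Lambda> UNIV \<longleftrightarrow> (\<forall>b. \<Lambda> (st b * a) = 0)"
  unfolding kerL_def form_def by auto

lemma kernel_subspace:
  assumes "herm_on sm st UNIV \<Lambda>" shows "subspace (kerL st \<Lambda> UNIV)"
proof -
  have lin: "\<Lambda> (a + b) = \<Lambda> a + \<Lambda> b" "\<Lambda> (sm c a) = c * \<Lambda> a" for a b c
    using assms unfolding herm_on_def lin_on_def by auto
  show ?thesis
  proof (rule subspaceI)
    show "0 \<in> kerL st \<Lambda> UNIV" unfolding kernel_iff using lin(2)[of 0 0] by simp
    show "x + y \<in> kerL st \<Lambda> UNIV" if "x \<in> kerL st \<Lambda> UNIV" "y \<in> kerL st \<Lambda> UNIV" for x y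
      using that unfolding kernel_iff by (simp add: distrib_left lin)
    show "sm c x \<in> kerL st \<Lambda> UNIV" if "x \<in> kerL st \<Lambda> UNIV" for c x
      using that unfolding kernel_iff by (simp add: sm_mr[symmetric] lin)
  qed
qed

lemma kernel_left_ideal: "k \<in> kerL st \<Lambda> UNIV \<Longrightarrow> a * k \<in> kerL st \<Lambda> UNIV"
  unfolding kernel_iff by (metis mult.assoc st_mult st_st)

lemma kernel_right:
  assumes "herm_on sm st UNIV \<Lambda>" "k \<in> kerL st \<Lambda> UNIV" shows "\<Lambda> (st k * a) = 0"
proof -
  have "\<Lambda> (st (st a * k)) = cnj (\<Lambda> (st a * k))" using assms(1) unfolding herm_on_def by auto
  moreover have "st (st a * k) = st k * a" by (simp add: st_mult st_st)
  ultimately show ?thesis using assms(2) unfolding kernel_iff by simp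
qed

lemma zero_flat_extension:
  assumes "0 \<in> V" shows "herm_on sm st UNIV (\<lambda>_. 0) \<and> flat_ext st (\<lambda>_. 0) V UNIV"
proof
  show "herm_on sm st UNIV (\<lambda>_. 0)" unfolding herm_on_def lin_on_def by simp
  have "x \<in> setplus V (kerL st (\<lambda>_. 0) UNIV)" for x :: 'a
    using assms unfolding setplus_def kernel_iff by force
  thus "flat_ext st (\<lambda>_. 0) V UNIV" unfolding flat_ext_def by auto
qed

end

locale gen_alg = star_alg sm st for sm :: "complex \<Rightarrow> 'a::ring_1 \<Rightarrow> 'a" and st +
  fixes gen :: "'i \<Rightarrow> 'a" and I :: "'i set"
  assumes gen_star: "\<forall>i\<in>I. \<exists>j\<in>I. st (gen i) = gen j"
    and gen_gen: "generates sm gen I"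
begin

lemma words_span: "a \<in> span {word_prod gen w | w. set w \<subseteq> I}"
  using gen_gen unfolding generates_def by simp

lemma word_induct:
  assumes "subspace {a. Q a}" and "\<And>w. set w \<subseteq> I \<Longrightarrow> Q (word_prod gen w)"
  shows "Q a"
  using span_induct[OF words_span assms(1)] assms(2) by blast

lemma fsigma_eq: "fsigma sm gen p = coeff_sum (word_prod gen) p"
  unfolding fsigma_def coeff_sum_def ..

lemma fsigma_add:
  "p \<in> fpoly I \<Longrightarrow> q \<in> fpoly I \<Longrightarrow> fsigma sm gen (\<lambda>w. p w + q w) = fsigma sm gen p + fsigma sm gen q"
  unfolding fsigma_eq by (simp add: coeff_sum_add fpoly_fin)

lemma fsigma_smult: "p \<in> fpoly I \<Longrightarrow> fsigma sm gen (\<lambda>w. c * p w) = sm c (fsigma sm gen p)"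
  unfolding fsigma_eq by (simp add: coeff_sum_smult fpoly_fin)

lemma fsigma_monomial: "fsigma sm gen (\<lambda>u. if u = w then 1 else 0) = word_prod gen w"
  unfolding fsigma_eq by (rule coeff_sum_monomial)

lemma fsigma_flmul: "p \<in> fpoly I \<Longrightarrow> fsigma sm gen (flmul i p) = gen i * fsigma sm gen p"
proof -
  assume p: "p \<in> fpoly I"
  have "gen i * coeff_sum (word_prod gen) p = coeff_sum (\<lambda>w. gen i * word_prod gen w) p"
    by (rule coeff_sum_linear_on[of UNIV]) (auto simp: distrib_left sm_mr fpoly_fin[OF p])
  thus ?thesis unfolding fsigma_eq coeff_sum_flmul by (simp add: word_prod_Cons)
qed

lemma fsigma_onto: "\<exists>p\<in>fpoly I. fsigma sm gen p = a"
proof (rule word_induct)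
  show "subspace {a. \<exists>p\<in>fpoly I. fsigma sm gen p = a}"
  proof (rule subspaceI)
    show "0 \<in> {a. \<exists>p\<in>fpoly I. fsigma sm gen p = a}"
      using fpoly_zero by (force simp: fsigma_eq coeff_sum_zero)
    show "x + y \<in> {a. \<exists>p\<in>fpoly I. fsigma sm gen p = a}"
      if "x \<in> {a. \<exists>p\<in>fpoly I. fsigma sm gen p = a}" "y \<in> {a. \<exists>p\<in>fpoly I. fsigma sm gen p = a}" for x y
      using that fsigma_add fpoly_add by fastforce
    show "sm c x \<in> {a. \<exists>p\<in>fpoly I. fsigma sm gen p = a}"
      if "x \<in> {a. \<exists>p\<in>fpoly I. fsigma sm gen p = a}" for c x
      using that fsigma_smult fpoly_smult by fastforce
  qed
qed (use fpoly_monomial fsigma_monomial in fastforce)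

definition adj :: "'i \<Rightarrow> 'i" where "adj i = (SOME j. j \<in> I \<and> st (gen i) = gen j)"

lemma adj: "i \<in> I \<Longrightarrow> adj i \<in> I \<and> st (gen i) = gen (adj i)"
  unfolding adj_def by (rule someI_ex) (use gen_star in blast)

definition word_adj :: "'i list \<Rightarrow> 'i list" where "word_adj w = rev (map adj w)"

lemma word_adj_letters: "set w \<subseteq> I \<Longrightarrow> set (word_adj w) \<subseteq> I"
  unfolding word_adj_def using adj by auto

lemma length_word_adj: "length (word_adj w) = length w"
  unfolding word_adj_def by simp

lemma st_word_prod: "set w \<subseteq> I \<Longrightarrow> st (word_prod gen w) = word_prod gen (word_adj w)"
  by (induction w) (simp_all add: word_prod_Cons word_prod_Nil word_prod_append word_adj_def st_mult adj)

lemma subspace_setplus: "subspace U \<Longrightarrow> subspace W \<Longrightarrow> subspace (setplus U W)"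
  unfolding setplus_def by (rule subspace_sums)

lemma prol_subspace: "subspace V \<Longrightarrow> subspace (prol sm gen I V)"
  unfolding prol_def by (intro subspace_setplus) auto

lemma prol_sup: "V \<subseteq> prol sm gen I V"
  unfolding prol_def setplus_def using span_zero by force

lemma prol_mono: "V \<subseteq> W \<Longrightarrow> prol sm gen I V \<subseteq> prol sm gen I W"
proof -
  assume VW: "V \<subseteq> W"
  hence "span {gen i * v |i v. i \<in> I \<and> v \<in> V} \<subseteq> span {gen i * v |i v. i \<in> I \<and> v \<in> W}"
    by (intro span_mono) blast
  thus ?thesis unfolding prol_def setplus_def using VW by blast
qed

lemma prol_minimal:
  assumes W: "subspace W" and VW: "V \<subseteq> W" and gen: "\<And>i v. i \<in> I \<Longrightarrow> v \<in> V \<Longrightarrow> gen i * v \<in> W"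
  shows "prol sm gen I V \<subseteq> W"
proof -
  have "span {gen i * v |i v. i \<in> I \<and> v \<in> V} \<subseteq> W" using gen by (intro span_minimal[OF _ W]) auto
  thus ?thesis using VW subspace_add[OF W] unfolding prol_def setplus_def by blast
qed

lemma prol_gen: "subspace V \<Longrightarrow> i \<in> I \<Longrightarrow> v \<in> V \<Longrightarrow> gen i * v \<in> prol sm gen I V"
proof -
  assume V: "subspace V" and "i \<in> I" "v \<in> V"
  hence "gen i * v \<in> span {gen i * v |i v. i \<in> I \<and> v \<in> V}" by (intro span_base) auto
  moreover have "0 \<in> V" using V subspace_0 by auto
  ultimately show ?thesis unfolding prol_def setplus_def by force
qed

end

text \<open>L is a hermitian functional on C^2, flat with respect to B \<subseteq> C, with B^[m] \<subseteq> C and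
  2m \<ge> \<delta>(A).\<close>
locale flat_data = gen_alg sm st gen I
  for sm :: "complex \<Rightarrow> 'a::ring_1 \<Rightarrow> 'a" and st and gen :: "'i \<Rightarrow> 'a" and I +
  fixes B C :: "'a set" and L :: "'a \<Rightarrow> complex" and m :: nat
  assumes B_sub: "subspace B"
    and C_sub: "subspace C" and C_star: "star_inv st C"
    and BC: "B \<subseteq> C" and one_B: "1 \<in> B"
    and C_conn: "connected_to_1 sm gen I C"
    and m1: "1 \<le> m"
    and Bm: "(prol sm gen I ^^ m) B \<subseteq> C"
    and delta: "delta_alg sm gen I \<le> enat (2 * m)"
    and L_herm: "herm_on sm st (sq sm C) L"
    and L_flat: "flat_ext st L B C"
begin

abbreviation K where "K \<equiv> kerL st L C"

lemma one_C: "1 \<in> C"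
  using BC one_B by blast

lemma L_add: "x \<in> sq sm C \<Longrightarrow> y \<in> sq sm C \<Longrightarrow> L (x + y) = L x + L y"
  using L_herm unfolding herm_on_def lin_on_def by auto

lemma L_sm: "x \<in> sq sm C \<Longrightarrow> L (sm c x) = c * L x"
  using L_herm unfolding herm_on_def lin_on_def by auto

lemma L_st: "x \<in> sq sm C \<Longrightarrow> L (st x) = cnj (L x)"
  using L_herm unfolding herm_on_def by auto

lemma sqC_sub: "subspace (sq sm C)"
  unfolding sq_def by simp

lemma prod_sqC: "a \<in> C \<Longrightarrow> b \<in> C \<Longrightarrow> a * b \<in> sq sm C"
  unfolding sq_def by (rule span_base) auto

lemma C_sqC: "a \<in> C \<Longrightarrow> a \<in> sq sm C"
  using prod_sqC[OF one_C, of a] by simp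

lemma L_0: "L 0 = 0"
  using L_sm[of 0 0] subspace_0[OF sqC_sub] by simp

lemma st_C: "a \<in> C \<Longrightarrow> st a \<in> C"
  using C_star unfolding star_inv_def by auto

lemma form_sqC: "a \<in> C \<Longrightarrow> b \<in> C \<Longrightarrow> st a * b \<in> sq sm C"
  using prod_sqC st_C by blast

lemma sqC_induct:
  assumes x: "x \<in> sq sm C" and Q: "subspace {x. Q x}"
    and prod: "\<And>a b. a \<in> C \<Longrightarrow> b \<in> C \<Longrightarrow> Q (st a * b)"
  shows "Q x"
proof -
  have "Q (a * b)" if "a \<in> C" "b \<in> C" for a b using prod[OF st_C[OF that(1)] that(2)] by (simp add: st_st)
  thus ?thesis using span_induct[OF x[unfolded sq_def] Q] by blast
qed

lemma K_C: "K \<subseteq> C"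
  unfolding kerL_def by auto

lemma K_iff: "k \<in> K \<longleftrightarrow> k \<in> C \<and> (\<forall>b\<in>C. L (st b * k) = 0)"
  unfolding kerL_def form_def by auto

lemma K_left: "k \<in> K \<Longrightarrow> b \<in> C \<Longrightarrow> L (st b * k) = 0"
  using K_iff by auto

lemma K_right: "k \<in> K \<Longrightarrow> b \<in> C \<Longrightarrow> L (st k * b) = 0"
proof -
  assume k: "k \<in> K" and b: "b \<in> C"
  have "st (st k * b) = st b * k" by (simp add: st_mult st_st)
  hence "L (st b * k) = cnj (L (st k * b))" using L_st form_sqC k b K_C by (metis subsetD)
  thus ?thesis using K_left[OF k b] by simp
qed

lemma K_sub: "subspace K"
proof (rule subspaceI)
  show "0 \<in> K" unfolding K_iff using subspace_0[OF C_sub] L_0 by simp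
next
  fix x y assume x: "x \<in> K" and y: "y \<in> K"
  have "L (st b * (x + y)) = 0" if "b \<in> C" for b
    using x y that K_C K_left by (simp add: distrib_left L_add form_sqC subset_iff)
  thus "x + y \<in> K" unfolding K_iff using x y K_C subspace_add[OF C_sub] by blast
next
  fix c x assume x: "x \<in> K"
  have "L (st b * sm c x) = 0" if "b \<in> C" for b
    using x that K_C K_left by (simp add: sm_mr[symmetric] L_sm form_sqC subset_iff)
  thus "sm c x \<in> K" unfolding K_iff using x K_C subspace_scale[OF C_sub] by blast
qed

lemma decompC: "c \<in> C \<Longrightarrow> \<exists>b k. b \<in> B \<and> k \<in> K \<and> c = b + k"
  using L_flat unfolding flat_ext_def setplus_def by blast

abbreviation Bpow :: "nat \<Rightarrow> 'a set" where "Bpow k \<equiv> (prol sm gen I ^^ k) B"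

lemma Bpow_sub: "subspace (Bpow k)"
  by (induction k) (auto simp: B_sub prol_subspace)

lemma Bpow_C: "k \<le> m \<Longrightarrow> Bpow k \<subseteq> C"
proof -
  have "Bpow k \<subseteq> Bpow (k + j)" for j by (induction j) (use prol_sup in auto)
  thus "k \<le> m \<Longrightarrow> Bpow k \<subseteq> C" using Bm by (metis le_add_diff_inverse order_trans)
qed

lemma genB_C: "i \<in> I \<Longrightarrow> b \<in> B \<Longrightarrow> gen i * b \<in> C"
  using prol_gen[OF B_sub] Bpow_C[of 1] m1 by auto

text \<open>The vectors x with L(b^* x) = 0 for all b \<in> B form a subspace containing K and every a_i K
  (as L(b^* a_i k) = L((a_i^* b)^* k) with a_i^* b \<in> C); by flatness this orthogonality to B
  extends to orthogonality to all of C.\<close>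
lemma prol_K_in_C: assumes x: "x \<in> prol sm gen I K" "x \<in> C" shows "x \<in> K"
proof -
  let ?Q = "\<lambda>x. \<forall>b\<in>B. st b * x \<in> sq sm C \<and> L (st b * x) = 0"
  have Qsub: "subspace {x. ?Q x}"
  proof (rule subspaceI)
    show "0 \<in> Collect ?Q" using subspace_0[OF sqC_sub] L_0 by simp
    show "x + y \<in> Collect ?Q" if "x \<in> Collect ?Q" "y \<in> Collect ?Q" for x y
      using that by (auto simp: distrib_left L_add subspace_add[OF sqC_sub])
    show "sm c x \<in> Collect ?Q" if "x \<in> Collect ?Q" for c x
      using that by (auto simp: sm_mr[symmetric] L_sm subspace_scale[OF sqC_sub])
  qed
  have QK: "?Q k" if k: "k \<in> K" for k
    using K_left[OF k] form_sqC[OF _ subsetD[OF K_C k]] BC by blast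
  have "?Q (gen i * k)" if i: "i \<in> I" and k: "k \<in> K" for i k
  proof
    fix b assume b: "b \<in> B"
    obtain j where j: "j \<in> I" "st (gen i) = gen j" using gen_star i by blast
    have e: "st b * (gen i * k) = st (gen j * b) * k" by (metis j(2) st_mult st_st mult.assoc)
    have jb: "gen j * b \<in> C" using genB_C[OF j(1) b] .
    show "st b * (gen i * k) \<in> sq sm C \<and> L (st b * (gen i * k)) = 0"
      unfolding e using K_left[OF k jb] form_sqC[OF jb subsetD[OF K_C k]] by blast
  qed
  hence "prol sm gen I K \<subseteq> {x. ?Q x}" by (intro prol_minimal[OF Qsub]) (use QK in auto)
  hence "?Q x" using x(1) by blast
  have "L (st c * x) = 0" if c: "c \<in> C" for c
  proof -
    obtain b k where b: "b \<in> B" and k: "k \<in> K" and cbk: "c = b + k" using decompC[OF c] by blast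
    have "L (st c * x) = L (st b * x) + L (st k * x)"
      unfolding cbk st_add distrib_right
      using \<open>?Q x\<close> b form_sqC[OF subsetD[OF K_C k] x(2)] by (intro L_add) auto
    thus ?thesis using \<open>?Q x\<close> b K_right[OF k x(2)] by simp
  qed
  thus "x \<in> K" unfolding K_iff using x(2) by blast
qed

text \<open>If 1 \<in> K, then the whole filtration of C starting from span {1} stays inside K.\<close>
lemma C_in_K_if_one: assumes "1 \<in> K" shows "C \<subseteq> K"
proof -
  obtain Vs where V0: "Vs 0 = span {1}" and Vpr: "\<And>l. Vs (Suc l) \<subseteq> prol sm gen I (Vs l)"
    and VC: "(\<Union>l. Vs l) = C"
    using C_conn unfolding connected_to_1_def by blast
  have "Vs l \<subseteq> K" for l
  proof (induction l)
    case 0 thus ?case unfolding V0 using assms K_sub by (simp add: span_minimal)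
  next
    case (Suc l)
    have "Vs (Suc l) \<subseteq> prol sm gen I K" using Vpr prol_mono[OF Suc] by blast
    moreover have "Vs (Suc l) \<subseteq> C" using VC by blast
    ultimately show ?case using prol_K_in_C by blast
  qed
  thus ?thesis using VC by blast
qed

lemma L_vanishes_if_one_in_K: assumes one: "1 \<in> K" and x: "x \<in> sq sm C" shows "L x = 0"
proof -
  have "x \<in> sq sm C \<and> L x = 0"
  proof (rule sqC_induct[OF x])
    show "subspace {x. x \<in> sq sm C \<and> L x = 0}"
      by (rule subspaceI) (auto simp: L_0 L_add L_sm subspace_0[OF sqC_sub] subspace_add[OF sqC_sub]
          subspace_scale[OF sqC_sub])
    show "st a * b \<in> sq sm C \<and> L (st a * b) = 0" if "a \<in> C" "b \<in> C" for a b
      using that form_sqC K_left C_in_K_if_one[OF one] by blast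
  qed
  thus ?thesis by simp
qed

lemma exists_complement:
  assumes "\<exists>x\<in>sq sm C. L x \<noteq> 0"
  shows "\<exists>B'. subspace B' \<and> B' \<subseteq> B \<and> 1 \<in> B' \<and> direct_sum B' K C"
proof -
  have "1 \<notin> B \<inter> K" using L_vanishes_if_one_in_K assms by blast
  then obtain B' where B': "subspace B'" "B' \<subseteq> B" "1 \<in> B'" "B' \<inter> (B \<inter> K) = {0}"
    "B \<subseteq> setplus B' (B \<inter> K)"
    using complement_containing[OF B_sub subspace_inter[OF B_sub K_sub] _ one_B] by blast
  have "B' \<inter> K = {0}" using B'(2,4) by blast
  moreover have "setplus B' K = C"
  proof
    show "setplus B' K \<subseteq> C"
      using B'(2) BC K_C subspace_add[OF C_sub] unfolding setplus_def by blast
    show "C \<subseteq> setplus B' K"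
    proof
      fix c assume "c \<in> C"
      then obtain b k where b: "b \<in> B" and k: "k \<in> K" and cbk: "c = b + k" using decompC by blast
      then obtain b' k' where b': "b' \<in> B'" and k': "k' \<in> K" and bbk: "b = b' + k'"
        using B'(5) unfolding setplus_def by blast
      have "c = b' + (k' + k)" using cbk bbk by (simp add: add.assoc)
      thus "c \<in> setplus B' K" using b' subspace_add[OF K_sub k' k] unfolding setplus_def by blast
    qed
  qed
  ultimately show ?thesis using B' unfolding direct_sum_def by blast
qed

lemma K_sub_kernel:
  assumes h: "herm_on sm st UNIV \<Lambda>" and ext: "\<forall>x\<in>sq sm C. \<Lambda> x = L x"
    and fl: "flat_ext st \<Lambda> C UNIV"
  shows "K \<subseteq> kerL st \<Lambda> UNIV"
proof
  fix k assume k: "k \<in> K"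
  have lin: "\<Lambda> (a + b) = \<Lambda> a + \<Lambda> b" for a b
    using h unfolding herm_on_def lin_on_def by auto
  show "k \<in> kerL st \<Lambda> UNIV" unfolding kernel_iff
  proof
    fix b
    have "b \<in> setplus C (kerL st \<Lambda> UNIV)" using fl unfolding flat_ext_def by auto
    then obtain c k' where c: "c \<in> C" and k': "k' \<in> kerL st \<Lambda> UNIV" and bck: "b = c + k'"
      unfolding setplus_def by blast
    have "\<Lambda> (st b * k) = \<Lambda> (st c * k) + \<Lambda> (st k' * k)"
      unfolding bck st_add distrib_right lin ..
    also have "\<Lambda> (st c * k) = L (st c * k)" using ext form_sqC[OF c] k K_C by auto
    also have "\<dots> = 0" using K_left[OF k c] .
    also have "\<Lambda> (st k' * k) = 0" using kernel_right[OF h k'] .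
    finally show "\<Lambda> (st b * k) = 0" by simp
  qed
qed

lemma flat_ext_C_iff_B:
  assumes h: "herm_on sm st UNIV \<Lambda>" and ext: "\<forall>x\<in>sq sm C. \<Lambda> x = L x"
  shows "flat_ext st \<Lambda> C UNIV \<longleftrightarrow> flat_ext st \<Lambda> B UNIV"
proof
  assume fl: "flat_ext st \<Lambda> C UNIV"
  have "x \<in> setplus B (kerL st \<Lambda> UNIV)" for x
  proof -
    obtain c k' where c: "c \<in> C" and k': "k' \<in> kerL st \<Lambda> UNIV" and xck: "x = c + k'"
      using fl unfolding flat_ext_def setplus_def by blast
    obtain b k where b: "b \<in> B" and k: "k \<in> K" and cbk: "c = b + k" using decompC[OF c] by blast
    have "k + k' \<in> kerL st \<Lambda> UNIV"
      using K_sub_kernel[OF h ext fl] k k' subspace_add[OF kernel_subspace[OF h]] by blast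
    moreover have "x = b + (k + k')" using xck cbk by (simp add: add.assoc)
    ultimately show ?thesis using b unfolding setplus_def by blast
  qed
  thus "flat_ext st \<Lambda> B UNIV" unfolding flat_ext_def by auto
next
  assume "flat_ext st \<Lambda> B UNIV"
  thus "flat_ext st \<Lambda> C UNIV" using BC unfolding flat_ext_def setplus_def by blast
qed

lemma flat_extension_zero_unique:
  assumes z: "\<forall>x\<in>sq sm C. L x = 0"
    and h: "herm_on sm st UNIV \<Lambda>" and ext: "\<forall>x\<in>sq sm C. \<Lambda> x = L x"
    and fl: "flat_ext st \<Lambda> C UNIV"
  shows "\<Lambda> = (\<lambda>_. 0)"
proof
  fix a
  obtain c k where c: "c \<in> C" and k: "k \<in> kerL st \<Lambda> UNIV" and e: "a = c + k"
    using fl unfolding flat_ext_def setplus_def by blast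
  have "\<Lambda> a = \<Lambda> c + \<Lambda> (st 1 * k)" unfolding e using h unfolding herm_on_def lin_on_def by simp
  also have "\<Lambda> (st 1 * k) = 0" using k unfolding kernel_iff by blast
  also have "\<Lambda> c = 0" using ext z C_sqC[OF c] by simp
  finally show "\<Lambda> a = 0" by simp
qed

lemma L_quadratic_expand:
  assumes b: "b \<in> C" and w: "w \<in> C"
  shows "L (st (b + sm c w) * (b + sm c w)) = L (st b * b) + c * L (st b * w)
    + cnj c * L (st w * b) + (cnj c * c) * L (st w * w)"
proof -
  have "st (b + sm c w) * (b + sm c w)
      = st b * b + sm c (st b * w) + sm (cnj c) (st w * b) + sm (cnj c * c) (st w * w)"
    by (simp add: st_add st_sm distrib_left distrib_right sm_ml[symmetric] sm_mr[symmetric]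
        add.assoc mult.commute scale_right_distrib)
  thus ?thesis
    using form_sqC b w by (simp add: L_add L_sm subspace_add[OF sqC_sub] subspace_scale[OF sqC_sub])
qed

text \<open>Cauchy-Schwarz for a positive L: an isotropic vector b of C is orthogonal to all of C.\<close>
lemma isotropic_orthogonal:
  assumes pos: "positive_on st C L" and b: "b \<in> C" and w: "w \<in> C" and bb: "L (st b * b) = 0"
  shows "L (st w * b) = 0"
proof -
  let ?z = "L (st w * b)" and ?G = "L (st w * w)"
  have "0 \<le> ?G" using pos w unfolding positive_on_def by blast
  hence G: "Im ?G = 0" "Re ?G \<ge> 0" by (auto simp: less_eq_complex_def)
  have zc: "L (st b * w) = cnj ?z"
  proof -
    have "st (st w * b) = st b * w" by (simp add: st_mult st_st)
    thus ?thesis using L_st[OF form_sqC[OF w b]] by simp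
  qed
  have "0 \<le> Re (?z * cnj ?z) * (t^2 * Re ?G - 2 * t)" if "t > 0" for t :: real
  proof -
    define c where "c = - (complex_of_real t * ?z)"
    have "b + sm c w \<in> C" using b w subspace_add[OF C_sub] subspace_scale[OF C_sub] by blast
    hence "0 \<le> L (st (b + sm c w) * (b + sm c w))" using pos unfolding positive_on_def by blast
    hence "0 \<le> c * cnj ?z + cnj c * ?z + (cnj c * c) * ?G" using L_quadratic_expand[OF b w] bb zc by simp
    also have "c * cnj ?z + cnj c * ?z + (cnj c * c) * ?G
        = (?z * cnj ?z) * complex_of_real (t^2) * ?G - 2 * complex_of_real t * (?z * cnj ?z)"
      unfolding c_def by (simp add: algebra_simps power2_eq_square)
    finally have "0 \<le> Re ((?z * cnj ?z) * complex_of_real (t^2) * ?G - 2 * complex_of_real t * (?z * cnj ?z))"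
      by (simp add: less_eq_complex_def)
    moreover have "Im (?z * cnj ?z) = 0" by simp
    ultimately show ?thesis using G(1) by (simp add: algebra_simps)
  qed
  thus ?thesis using complex_zero_by_quadratic_bound[OF G] by blast
qed

end

subsection \<open>The action of words on a complement B' of K\<close>

locale flat_basis = flat_data +
  fixes Bp :: "'a set"
  assumes Bp_sub: "subspace Bp" and Bp_B: "Bp \<subseteq> B" and one_Bp: "1 \<in> Bp"
    and ds: "direct_sum Bp K C"
begin

definition pr :: "'a \<Rightarrow> 'a" where "pr = proj Bp K"

lemma Bp_C: "Bp \<subseteq> C" using Bp_B BC by auto

lemma BpK: "Bp \<inter> K = {0}" using ds unfolding direct_sum_def by auto

lemma pr_unique: "u \<in> Bp \<Longrightarrow> x - u \<in> K \<Longrightarrow> pr x = u"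
  unfolding pr_def by (rule proj_unique[OF Bp_sub K_sub BpK])

lemma pr_C: assumes c: "c \<in> C" shows "pr c \<in> Bp" "c - pr c \<in> K"
proof -
  obtain u w where u: "u \<in> Bp" "w \<in> K" "c = u + w"
    using ds c unfolding direct_sum_def setplus_def by blast
  hence "pr c = u" by (intro pr_unique) auto
  thus "pr c \<in> Bp" "c - pr c \<in> K" using u by auto
qed

lemma pr_Bp: "b \<in> Bp \<Longrightarrow> pr b = b"
  by (rule pr_unique) (auto simp: subspace_0[OF K_sub])

lemma pr_eq: assumes "x \<in> C" "x - y \<in> K" shows "pr x = pr y"
proof -
  have "y \<in> C" using assms K_C subspace_diff[OF C_sub, of x "x - y"] by auto
  have "x - pr y = (x - y) + (y - pr y)" by simp
  hence "x - pr y \<in> K" using assms pr_C(2)[OF \<open>y \<in> C\<close>] subspace_add[OF K_sub] by metis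
  thus ?thesis using pr_unique pr_C(1)[OF \<open>y \<in> C\<close>] by blast
qed

lemma pr_add: assumes "x \<in> C" "y \<in> C" shows "pr (x + y) = pr x + pr y"
proof (rule pr_unique)
  show "pr x + pr y \<in> Bp" using pr_C assms subspace_add[OF Bp_sub] by blast
  have "x + y - (pr x + pr y) = (x - pr x) + (y - pr y)" by simp
  thus "x + y - (pr x + pr y) \<in> K" using assms pr_C(2) subspace_add[OF K_sub] by metis
qed

lemma pr_sm: assumes "x \<in> C" shows "pr (sm c x) = sm c (pr x)"
proof (rule pr_unique)
  show "sm c (pr x) \<in> Bp" using pr_C assms subspace_scale[OF Bp_sub] by blast
  have "sm c x - sm c (pr x) = sm c (x - pr x)" by (simp add: scale_right_diff_distrib)
  thus "sm c x - sm c (pr x) \<in> K" using assms pr_C(2) subspace_scale[OF K_sub] by metis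
qed

lemma pr_0: "pr 0 = 0"
  using pr_Bp subspace_0[OF Bp_sub] by blast

lemma L_pr: assumes x: "x \<in> C" and y: "y \<in> C" shows "L (st y * x) = L (st (pr y) * pr x)"
proof -
  let ?kx = "x - pr x" and ?ky = "y - pr y"
  have kx: "?kx \<in> K" and ky: "?ky \<in> K" using pr_C x y by auto
  have px: "pr x \<in> C" and py: "pr y \<in> C" using pr_C x y Bp_C by auto
  have e: "st y * x = st (pr y) * pr x + st (pr y) * ?kx + st ?ky * x"
    by (simp add: st_diff algebra_simps)
  have "L (st y * x) = L (st (pr y) * pr x) + L (st (pr y) * ?kx) + L (st ?ky * x)"
    unfolding e using x px py kx ky K_C
    by (simp add: L_add form_sqC subspace_add[OF sqC_sub] subset_iff)
  thus ?thesis using K_left[OF kx py] K_right[OF ky x] by simp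
qed

lemma nondeg: assumes v: "v \<in> Bp" and h: "\<forall>w\<in>Bp. L (st w * v) = 0" shows "v = 0"
proof -
  have vC: "v \<in> C" using v Bp_C by auto
  have "L (st c * v) = 0" if c: "c \<in> C" for c
    using L_pr[OF vC c] h pr_C[OF c] pr_Bp[OF v] by simp
  hence "v \<in> K" unfolding K_iff using vC by blast
  thus ?thesis using v BpK by auto
qed

lemma genBp_C: "i \<in> I \<Longrightarrow> v \<in> Bp \<Longrightarrow> gen i * v \<in> C"
  using genB_C Bp_B by auto

lemma pr_gen_adjoint:
  assumes i: "i \<in> I" and x: "x \<in> Bp" and w: "w \<in> Bp"
  shows "L (st w * pr (gen i * x)) = L (st (pr (gen (adj i) * w)) * x)"
proof -
  have j: "adj i \<in> I" "st (gen i) = gen (adj i)" using adj[OF i] by auto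
  have "L (st w * pr (gen i * x)) = L (st (pr w) * pr (gen i * x))" using pr_Bp[OF w] by simp
  also have "\<dots> = L (st w * (gen i * x))" using L_pr genBp_C[OF i x] w Bp_C by auto
  also have "st w * (gen i * x) = st (gen (adj i) * w) * x"
    by (metis j(2) mult.assoc st_mult st_st)
  also have "L \<dots> = L (st (pr (gen (adj i) * w)) * pr x)" using L_pr genBp_C[OF j(1) w] x Bp_C by auto
  also have "\<dots> = L (st (pr (gen (adj i) * w)) * x)" using pr_Bp[OF x] by simp
  finally show ?thesis .
qed

definition wact where
  "wact w v = foldr (\<lambda>i x. pr (gen i * x)) w v"

lemma wact_Nil [simp]: "wact [] v = v" unfolding wact_def by simp
lemma wact_Cons [simp]: "wact (i # w) v = pr (gen i * wact w v)" unfolding wact_def by simp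
lemma wact_append: "wact (u @ w) v = wact u (wact w v)" unfolding wact_def by simp

lemma wact_Bp: "set w \<subseteq> I \<Longrightarrow> v \<in> Bp \<Longrightarrow> wact w v \<in> Bp"
  by (induction w) (auto intro: pr_C genBp_C)

lemma wact_add: "set w \<subseteq> I \<Longrightarrow> v \<in> Bp \<Longrightarrow> v' \<in> Bp \<Longrightarrow> wact w (v + v') = wact w v + wact w v'"
  by (induction w) (simp_all add: distrib_left pr_add genBp_C wact_Bp)

lemma wact_sm: "set w \<subseteq> I \<Longrightarrow> v \<in> Bp \<Longrightarrow> wact w (sm c v) = sm c (wact w v)"
  by (induction w) (simp_all add: sm_mr[symmetric] pr_sm genBp_C wact_Bp)

text \<open>For words of length at most m the action is the projection of the product: the product
  stays in B^[|w|] \<subseteq> C and each intermediate projection only changes it by elements of K^+.\<close>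
lemma wact_short:
  assumes "set w \<subseteq> I" "length w \<le> m" "v \<in> Bp"
  shows "word_prod gen w * v \<in> Bpow (length w) \<and> wact w v = pr (word_prod gen w * v)"
  using assms
proof (induction w)
  case Nil thus ?case using Bp_B pr_Bp by (auto simp: word_prod_Nil)
next
  case (Cons i w)
  let ?x = "word_prod gen w * v"
  have i: "i \<in> I" and IH: "?x \<in> Bpow (length w)" "wact w v = pr ?x" using Cons by auto
  have xC: "?x \<in> C" using IH(1) Bpow_C[of "length w"] Cons(3) by auto
  have a: "gen i * ?x \<in> Bpow (length (i # w))" using prol_gen[OF Bpow_sub i IH(1)] by simp
  have aC: "gen i * ?x \<in> C" using a Bpow_C Cons(3) by blast
  have bC: "gen i * pr ?x \<in> C" using genBp_C[OF i] pr_C[OF xC] by blast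
  have "gen i * ?x - gen i * pr ?x = gen i * (?x - pr ?x)" by (simp add: algebra_simps)
  also have "\<dots> \<in> prol sm gen I K" using prol_gen[OF K_sub i pr_C(2)[OF xC]] .
  finally have "gen i * ?x - gen i * pr ?x \<in> K"
    using prol_K_in_C subspace_diff[OF C_sub aC bC] by blast
  hence "pr (gen i * ?x) = pr (gen i * pr ?x)" using pr_eq aC by blast
  thus ?case using a IH by (simp add: word_prod_Cons mult.assoc)
qed

lemma wact_adjoint:
  assumes "set u \<subseteq> I" "x \<in> Bp" "w \<in> Bp"
  shows "L (st w * wact u x) = L (st (wact (word_adj u) w) * x)"
  using assms
proof (induction u arbitrary: w)
  case Nil thus ?case by (simp add: word_adj_def)
next
  case (Cons i u)
  have i: "i \<in> I" and u: "set u \<subseteq> I" using Cons by auto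
  have "L (st w * wact (i # u) x) = L (st (pr (gen (adj i) * w)) * wact u x)"
    using pr_gen_adjoint[OF i wact_Bp[OF u Cons(3)] Cons(4)] by simp
  also have "\<dots> = L (st (wact (word_adj u) (pr (gen (adj i) * w))) * x)"
    using Cons(1)[OF u Cons(3)] pr_C genBp_C adj i Cons(4) by blast
  also have "wact (word_adj u) (pr (gen (adj i) * w)) = wact (word_adj (i # u)) w"
    by (simp add: word_adj_def wact_append)
  finally show ?case .
qed

text \<open>For words of length at most 2m the action reproduces the form of the product:
  split u = u_1 u_2 with |u_1|, |u_2| \<le> m and move u_1 to the other side.\<close>
lemma wact_long:
  assumes u: "set u \<subseteq> I" and len: "length u \<le> 2 * m" and v: "v \<in> Bp" and w: "w \<in> Bp"
  shows "st w * (word_prod gen u * v) \<in> sq sm C \<and>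
    L (st w * wact u v) = L (st w * (word_prod gen u * v))"
proof -
  define u1 where "u1 = take (length u - m) u"
  define u2 where "u2 = drop (length u - m) u"
  have uu: "u = u1 @ u2" unfolding u1_def u2_def by simp
  have l1: "length u1 \<le> m" and l2: "length u2 \<le> m" using len unfolding u1_def u2_def by auto
  have I1: "set u1 \<subseteq> I" and I2: "set u2 \<subseteq> I" using u uu by auto
  let ?a = "word_prod gen u2 * v"
  let ?z = "word_prod gen (word_adj u1) * w"
  have a: "?a \<in> C" "wact u2 v = pr ?a" using wact_short[OF I2 l2 v] Bpow_C l2 by auto
  have z: "?z \<in> C" "wact (word_adj u1) w = pr ?z"
    using wact_short[OF word_adj_letters[OF I1] _ w] Bpow_C l1 length_word_adj by auto
  have e: "st ?z * ?a = st w * (word_prod gen u * v)"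
  proof -
    have "st (word_prod gen (word_adj u1)) = word_prod gen u1"
      using st_word_prod[OF I1] st_st by metis
    thus ?thesis unfolding uu word_prod_append by (simp add: st_mult mult.assoc)
  qed
  have "L (st w * wact u v) = L (st (wact (word_adj u1) w) * wact u2 v)"
    unfolding uu wact_append using wact_adjoint[OF I1 wact_Bp[OF I2 v] w] .
  also have "\<dots> = L (st ?z * ?a)" using a z L_pr[OF a(1) z(1)] by simp
  finally show ?thesis using form_sqC[OF z(1) a(1)] e by simp
qed

definition pact where "pact p v = coeff_sum (\<lambda>w. wact w v) p"

lemma pact_Bp: "p \<in> fpoly I \<Longrightarrow> v \<in> Bp \<Longrightarrow> pact p v \<in> Bp"
  unfolding pact_def by (rule coeff_sum_in[OF Bp_sub]) (simp add: wact_Bp fpoly_letters)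

lemma pact_addp: "p \<in> fpoly I \<Longrightarrow> q \<in> fpoly I \<Longrightarrow> pact (\<lambda>w. p w + q w) v = pact p v + pact q v"
  unfolding pact_def by (simp add: coeff_sum_add fpoly_fin)

lemma pact_smultp: "p \<in> fpoly I \<Longrightarrow> pact (\<lambda>w. c * p w) v = sm c (pact p v)"
  unfolding pact_def by (simp add: coeff_sum_smult fpoly_fin)

lemma pact_monomial: "pact (\<lambda>u. if u = w then 1 else 0) v = wact w v"
  unfolding pact_def by (rule coeff_sum_monomial)

lemma pact_flmul:
  assumes i: "i \<in> I" and p: "p \<in> fpoly I" and v: "v \<in> Bp"
  shows "pact (flmul i p) v = pr (gen i * pact p v)"
proof -
  have "pr (gen i * pact p v) = coeff_sum (\<lambda>w. pr (gen i * wact w v)) p"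
    unfolding pact_def
  proof (rule coeff_sum_linear_on[OF Bp_sub])
    show "pr (gen i * (x + y)) = pr (gen i * x) + pr (gen i * y)" if "x \<in> Bp" "y \<in> Bp" for x y
      using that by (simp add: distrib_left pr_add genBp_C[OF i])
    show "pr (gen i * sm c x) = sm c (pr (gen i * x))" if "x \<in> Bp" for c x
      using that by (simp add: sm_mr[symmetric] pr_sm genBp_C[OF i])
  qed (use wact_Bp fpoly_letters[OF p] v fpoly_fin[OF p] in auto)
  thus ?thesis unfolding pact_def coeff_sum_flmul by simp
qed

lemma pact_frmul: "pact (frmul i p) v = pact p (pr (gen i * v))"
  unfolding pact_def coeff_sum_frmul by (simp add: wact_append)

lemma pact_addv: assumes p: "p \<in> fpoly I" and v: "v \<in> Bp" "v' \<in> Bp"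
  shows "pact p (v + v') = pact p v + pact p v'"
  unfolding pact_def coeff_sum_def
  by (simp add: sum.distrib[symmetric] scale_right_distrib[symmetric])
    (rule sum.cong, auto simp: wact_add fpoly_letters[OF p] v)

lemma pact_smv: assumes p: "p \<in> fpoly I" and v: "v \<in> Bp"
  shows "pact p (sm c v) = sm c (pact p v)"
  unfolding pact_def coeff_sum_def
  by (simp add: scale_sum_right) (rule sum.cong, auto simp: wact_sm fpoly_letters[OF p] v mult.commute)

text \<open>A relation s of index at most 2m (i.e. \<sigma>(s) = 0) acts by zero, since \<langle>s.v, w\<rangle>_L =
  L(w^* \<sigma>(s) v) = 0 for all w \<in> B' and \<langle>,\<rangle>_L is non-degenerate on B'.\<close>
lemma short_relation_acts_trivially:
  assumes s: "s \<in> fpoly I" and s0: "fsigma sm gen s = 0"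
    and len: "\<And>u. s u \<noteq> 0 \<Longrightarrow> length u \<le> 2 * m" and v: "v \<in> Bp"
  shows "pact s v = 0"
proof (rule nondeg[OF pact_Bp[OF s v]], rule ballI)
  fix w assume w: "w \<in> Bp"
  have wC: "st w \<in> C" using w Bp_C st_C by auto
  let ?U = "{x. st w * (x * v) \<in> sq sm C}"
  have U: "subspace ?U"
    by (rule subspaceI) (auto simp: distrib_left distrib_right sm_ml[symmetric] sm_mr[symmetric]
        subspace_0[OF sqC_sub] subspace_add[OF sqC_sub] subspace_scale[OF sqC_sub])
  have "L (st w * pact s v) = (\<Sum>u | s u \<noteq> 0. s u * L (st w * wact u v))"
    unfolding pact_def
  proof (rule coeff_sum_functional_on[OF Bp_sub])
    show "L (st w * (x + y)) = L (st w * x) + L (st w * y)" if "x \<in> Bp" "y \<in> Bp" for x y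
      using that Bp_C w by (simp add: distrib_left L_add form_sqC subset_iff)
    show "L (st w * sm c x) = c * L (st w * x)" if "x \<in> Bp" for c x
      using that Bp_C w by (simp add: sm_mr[symmetric] L_sm form_sqC subset_iff)
  qed (use wact_Bp fpoly_letters[OF s] v fpoly_fin[OF s] in auto)
  also have "\<dots> = (\<Sum>u | s u \<noteq> 0. s u * L (st w * (word_prod gen u * v)))"
    by (rule sum.cong) (use wact_long fpoly_letters[OF s] len v w in auto)
  also have "\<dots> = L (st w * (coeff_sum (word_prod gen) s * v))"
  proof (rule sym, rule coeff_sum_functional_on[OF U])
    show "L (st w * ((x + y) * v)) = L (st w * (x * v)) + L (st w * (y * v))" if "x \<in> ?U" "y \<in> ?U" for x y
      using that by (simp add: distrib_left distrib_right L_add)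
    show "L (st w * (sm c x * v)) = c * L (st w * (x * v))" if "x \<in> ?U" for c x
      using that by (simp add: sm_ml[symmetric] sm_mr[symmetric] L_sm)
  qed (use wact_long fpoly_letters[OF s] len v w fpoly_fin[OF s] in auto)
  also have "\<dots> = 0" using s0 L_0 by (simp add: fsigma_eq)
  finally show "L (st w * pact s v) = 0" .
qed

text \<open>Polynomials acting by zero form a two-sided ideal, so an ideal generated by such
  polynomials acts by zero.\<close>
lemma ideal_acts_trivially:
  assumes S: "S \<subseteq> fpoly I" and SZ: "\<And>s v. s \<in> S \<Longrightarrow> v \<in> Bp \<Longrightarrow> pact s v = 0"
    and p: "p \<in> fideal I S"
  shows "p \<in> fpoly I \<and> (\<forall>v\<in>Bp. pact p v = 0)"
  using p
proof (induction rule: fideal.induct)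
  case (gen s) thus ?case using S SZ by auto
next
  case zero thus ?case using fpoly_zero by (simp add: pact_def coeff_sum_zero)
next
  case (add p q) thus ?case by (simp add: fpoly_add pact_addp)
next
  case (smult p c) thus ?case by (simp add: fpoly_smult pact_smultp)
next
  case (lmul i p) thus ?case by (simp add: fpoly_flmul pact_flmul pr_0)
next
  case (rmul i p) thus ?case by (simp add: fpoly_frmul pact_frmul pr_C genBp_C)
qed

lemma kernel_acts_trivially:
  assumes p: "p \<in> fpoly I" "fsigma sm gen p = 0" and v: "v \<in> Bp"
  shows "pact p v = 0"
proof -
  obtain S where S: "S \<subseteq> fpoly I" "fideal I S = fker sm gen I"
    and len: "\<And>s u. s \<in> S \<Longrightarrow> s u \<noteq> 0 \<Longrightarrow> length u \<le> 2 * m"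
    using delta_alg_bound[OF delta] by blast
  have "pact s v = 0" if s: "s \<in> S" and v: "v \<in> Bp" for s v
  proof (rule short_relation_acts_trivially[OF _ _ len[OF s] v])
    show "s \<in> fpoly I" using S s by auto
    show "fsigma sm gen s = 0" using fideal.gen[OF s] S(2) unfolding fker_def by auto
  qed
  moreover have "p \<in> fideal I S" using S(2) p unfolding fker_def by auto
  ultimately show ?thesis using ideal_acts_trivially[OF S(1)] v by blast
qed

subsection \<open>The representation \<rho> of A on B'\<close>

text \<open>\<rho>(a) is the action of any polynomial representing a; by kernel_acts_trivially this does
  not depend on the choice of the representative.\<close>
definition rep where "rep a = (SOME p. p \<in> fpoly I \<and> fsigma sm gen p = a)"
definition rho where "rho a v = pact (rep a) v"

lemma rep: "rep a \<in> fpoly I \<and> fsigma sm gen (rep a) = a"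
  unfolding rep_def using fsigma_onto[of a] by (metis (mono_tags, lifting) someI_ex)

lemma rho_eq: assumes p: "p \<in> fpoly I" "fsigma sm gen p = a" and v: "v \<in> Bp"
  shows "rho a v = pact p v"
proof -
  let ?q = "rep a" and ?mp = "\<lambda>w. (-1) * p w"
  have q: "?q \<in> fpoly I" "fsigma sm gen ?q = a" using rep by auto
  have mp: "?mp \<in> fpoly I" using fpoly_smult[OF p(1)] .
  have "fsigma sm gen (\<lambda>w. ?q w + ?mp w) = a - a"
    using fsigma_add[OF q(1) mp] fsigma_smult[OF p(1), of "-1"] q(2) p(2) by simp
  hence "pact (\<lambda>w. ?q w + ?mp w) v = 0" using kernel_acts_trivially fpoly_add[OF q(1) mp] v by simp
  thus ?thesis unfolding rho_def using pact_addp[OF q(1) mp] pact_smultp[OF p(1), of "-1"] by simp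
qed

lemma rho_Bp: "v \<in> Bp \<Longrightarrow> rho a v \<in> Bp"
  unfolding rho_def using pact_Bp rep by blast

lemma rho_add: assumes v: "v \<in> Bp" shows "rho (a + b) v = rho a v + rho b v"
proof -
  have "rho (a + b) v = pact (\<lambda>w. rep a w + rep b w) v"
    by (rule rho_eq) (auto simp: rep fpoly_add fsigma_add v)
  thus ?thesis using pact_addp rep unfolding rho_def by auto
qed

lemma rho_sm: assumes v: "v \<in> Bp" shows "rho (sm c a) v = sm c (rho a v)"
proof -
  have "rho (sm c a) v = pact (\<lambda>w. c * rep a w) v"
    by (rule rho_eq) (auto simp: rep fpoly_smult fsigma_smult v)
  thus ?thesis using pact_smultp rep unfolding rho_def by auto
qed

lemma rho_0: "v \<in> Bp \<Longrightarrow> rho 0 v = 0"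
  using rho_sm[of v 0 0] by simp

lemma rho_diff: "v \<in> Bp \<Longrightarrow> rho (a - b) v = rho a v - rho b v"
  using rho_add[of v a "sm (-1) b"] rho_sm[of v "-1" b] by simp

lemma rho_1: assumes v: "v \<in> Bp" shows "rho 1 v = v"
proof -
  have "rho 1 v = pact (\<lambda>u. if u = [] then 1 else 0) v"
    by (rule rho_eq) (use fpoly_monomial[of "[]"] fsigma_monomial[of "[]"] v in \<open>auto simp: word_prod_Nil\<close>)
  thus ?thesis by (simp add: pact_monomial)
qed

lemma rho_gen: assumes i: "i \<in> I" and v: "v \<in> Bp" shows "rho (gen i * a) v = pr (gen i * rho a v)"
proof -
  have "rho (gen i * a) v = pact (flmul i (rep a)) v"
    by (rule rho_eq) (auto simp: rep fpoly_flmul fsigma_flmul i v)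
  thus ?thesis using pact_flmul[OF i _ v] rep unfolding rho_def by auto
qed

lemma rho_addv: "v \<in> Bp \<Longrightarrow> v' \<in> Bp \<Longrightarrow> rho a (v + v') = rho a v + rho a v'"
  unfolding rho_def using pact_addv rep by blast

lemma rho_smv: "v \<in> Bp \<Longrightarrow> rho a (sm c v) = sm c (rho a v)"
  unfolding rho_def using pact_smv rep by blast

lemma rho_genv: "i \<in> I \<Longrightarrow> v \<in> Bp \<Longrightarrow> rho (gen i) v = pr (gen i * v)"
  using rho_gen[of i v 1] rho_1 by simp

lemma rho_mult: assumes v: "v \<in> Bp" shows "rho (a * b) v = rho a (rho b v)"
proof -
  have "\<forall>b. \<forall>v\<in>Bp. rho (a * b) v = rho a (rho b v)"
  proof (rule word_induct)
    show "subspace {a. \<forall>b. \<forall>v\<in>Bp. rho (a * b) v = rho a (rho b v)}"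
      by (rule subspaceI) (auto simp: rho_0 rho_Bp distrib_right rho_add sm_ml[symmetric] rho_sm)
    show "\<forall>b. \<forall>v\<in>Bp. rho (word_prod gen w * b) v = rho (word_prod gen w) (rho b v)"
      if "set w \<subseteq> I" for w
      using that by (induction w) (simp_all add: word_prod_Nil word_prod_Cons mult.assoc rho_1 rho_gen rho_Bp)
  qed
  thus ?thesis using v by blast
qed

lemma rho_star: assumes v: "v \<in> Bp" and w: "w \<in> Bp"
  shows "L (st w * rho a v) = L (st (rho (st a) w) * v)"
proof -
  let ?Q = "\<lambda>a. \<forall>v\<in>Bp. \<forall>w\<in>Bp. L (st w * rho a v) = L (st (rho (st a) w) * v)"
  have sC: "st x * y \<in> sq sm C" if "x \<in> Bp" "y \<in> Bp" for x y
    using that Bp_C form_sqC by blast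
  have "?Q a"
  proof (rule word_induct[where Q = ?Q])
    show "subspace (Collect ?Q)"
      by (rule subspaceI) (simp_all add: rho_0 st_add rho_add distrib_left distrib_right L_add sC rho_Bp
          st_sm rho_sm sm_mr[symmetric] sm_ml[symmetric] L_sm)
    show "?Q (word_prod gen u)" if "set u \<subseteq> I" for u
      using that
    proof (induction u)
      case Nil thus ?case by (simp add: word_prod_Nil rho_1)
    next
      case (Cons i u)
      have i: "i \<in> I" and uI: "set u \<subseteq> I" using Cons by auto
      have j: "adj i \<in> I" "st (gen i) = gen (adj i)" using adj[OF i] by auto
      show ?case
      proof (intro ballI)
        fix v w assume v: "v \<in> Bp" and w: "w \<in> Bp"
        have pw: "pr (gen (adj i) * w) \<in> Bp" using pr_C genBp_C j w by blast
        have "L (st w * rho (word_prod gen (i # u)) v)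
            = L (st (pr (gen (adj i) * w)) * rho (word_prod gen u) v)"
          using pr_gen_adjoint[OF i rho_Bp[OF v] w] by (simp add: word_prod_Cons rho_gen i v)
        also have "\<dots> = L (st (rho (st (word_prod gen u)) (pr (gen (adj i) * w))) * v)"
          using Cons.IH[OF uI] v pw by blast
        also have "rho (st (word_prod gen u)) (pr (gen (adj i) * w)) = rho (st (word_prod gen (i # u))) w"
          by (simp add: word_prod_Cons st_mult j rho_mult w rho_genv)
        finally show "L (st w * rho (word_prod gen (i # u)) v)
            = L (st (rho (st (word_prod gen (i # u))) w) * v)" .
      qed
    qed
  qed
  thus ?thesis using v w by blast
qed

subsection \<open>The extension \<LL>(a) = \<langle>\<rho>(a) 1, 1\<rangle>_L\<close>

lemma residual_subspace: assumes U: "subspace U" shows "subspace {a. a - rho a 1 \<in> U}"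
proof (rule subspaceI)
  show "0 \<in> {a. a - rho a 1 \<in> U}" using subspace_0[OF U] by (simp add: rho_0 one_Bp)
  fix x y c assume x: "x \<in> {a. a - rho a 1 \<in> U}" and y: "y \<in> {a. a - rho a 1 \<in> U}"
  have "x + y - rho (x + y) 1 = (x - rho x 1) + (y - rho y 1)" by (simp add: rho_add one_Bp)
  thus "x + y \<in> {a. a - rho a 1 \<in> U}" using x y subspace_add[OF U] by (metis mem_Collect_eq)
  have "sm c x - rho (sm c x) 1 = sm c (x - rho x 1)" by (simp add: rho_sm one_Bp scale_right_diff_distrib)
  thus "sm c x \<in> {a. a - rho a 1 \<in> U}" using x subspace_scale[OF U] by simp
qed

lemma residual_gen:
  assumes i: "i \<in> I" shows "(gen i * a - rho (gen i * a) 1) - gen i * (a - rho a 1) \<in> K"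
proof -
  let ?r = "rho a 1"
  have "(gen i * a - rho (gen i * a) 1) - gen i * (a - ?r) = gen i * ?r - pr (gen i * ?r)"
    by (simp add: rho_gen[OF i one_Bp] algebra_simps)
  thus ?thesis using pr_C(2)[OF genBp_C[OF i rho_Bp[OF one_Bp]]] by simp
qed

text \<open>On C, \<rho>(c) 1 is the projection of c: induction along the filtration of C, using
  that K^+ meets C only inside K.\<close>
lemma residual_C: assumes c: "c \<in> C" shows "c - rho c 1 \<in> K"
proof -
  obtain Vs where V0: "Vs 0 = span {1}" and Vpr: "\<And>l. Vs (Suc l) \<subseteq> prol sm gen I (Vs l)"
    and VC: "(\<Union>l. Vs l) = C"
    using C_conn unfolding connected_to_1_def by blast
  have KK: "K \<subseteq> prol sm gen I K" by (rule prol_sup)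
  have "Vs l \<subseteq> {a. a - rho a 1 \<in> K}" for l
  proof (induction l)
    case 0
    have "1 \<in> {a. a - rho a 1 \<in> K}" using subspace_0[OF K_sub] by (simp add: rho_1 one_Bp)
    thus ?case unfolding V0 using residual_subspace[OF K_sub] by (simp add: span_minimal)
  next
    case (Suc l)
    have "prol sm gen I (Vs l) \<subseteq> {a. a - rho a 1 \<in> prol sm gen I K}"
    proof (rule prol_minimal[OF residual_subspace[OF prol_subspace[OF K_sub]]])
      show "Vs l \<subseteq> {a. a - rho a 1 \<in> prol sm gen I K}" using Suc KK by blast
      fix i v assume i: "i \<in> I" and v: "v \<in> Vs l"
      have "gen i * (v - rho v 1) \<in> prol sm gen I K" using prol_gen[OF K_sub i] Suc v by blast
      moreover have "(gen i * v - rho (gen i * v) 1) - gen i * (v - rho v 1) \<in> prol sm gen I K"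
        using residual_gen[OF i] KK by blast
      ultimately show "gen i * v \<in> {a. a - rho a 1 \<in> prol sm gen I K}"
        using subspace_add[OF prol_subspace[OF K_sub]] by fastforce
    qed
    moreover have "x - rho x 1 \<in> C" if "x \<in> Vs (Suc l)" for x
      using that VC rho_Bp[OF one_Bp] Bp_C subspace_diff[OF C_sub] by blast
    ultimately show ?case using Vpr prol_K_in_C by blast
  qed
  thus ?thesis using c VC by blast
qed

lemma rho_C1: "c \<in> C \<Longrightarrow> rho c 1 = pr c"
  using pr_unique[of "rho c 1" c] residual_C rho_Bp one_Bp by metis

lemma rho_Bp1: "b \<in> Bp \<Longrightarrow> rho b 1 = b"
  using rho_C1 pr_Bp Bp_C by auto

definition LL :: "'a \<Rightarrow> complex" where "LL a = L (rho a 1)"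

lemma rho1_Bp: "rho a 1 \<in> Bp" using rho_Bp one_Bp by blast
lemma rho1_C: "rho a 1 \<in> C" using rho1_Bp Bp_C by blast

lemma LL_form: "LL (st b * a) = L (st (rho b 1) * rho a 1)"
proof -
  have "LL (st b * a) = L (st 1 * rho (st b) (rho a 1))" unfolding LL_def by (simp add: rho_mult one_Bp)
  also have "\<dots> = L (st (rho (st (st b)) 1) * rho a 1)" using rho_star[OF rho1_Bp one_Bp] .
  finally show ?thesis by (simp add: st_st)
qed

lemma LL_herm: "herm_on sm st UNIV LL"
  unfolding herm_on_def lin_on_def
proof safe
  show "LL (a + b) = LL a + LL b" for a b unfolding LL_def by (simp add: rho_add one_Bp L_add C_sqC rho1_C)
  show "LL (sm c a) = c * LL a" for c a unfolding LL_def by (simp add: rho_sm one_Bp L_sm C_sqC rho1_C)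
  show "LL (st b) = cnj (LL b)" for b
  proof -
    have "LL (st b) = L (st 1 * rho (st b) 1)" unfolding LL_def by simp
    also have "\<dots> = L (st (rho (st (st b)) 1) * 1)" using rho_star[OF one_Bp one_Bp] .
    also have "\<dots> = cnj (LL b)" unfolding LL_def by (simp add: st_st L_st C_sqC rho1_C)
    finally show ?thesis .
  qed
qed

lemma LL_ext: assumes x: "x \<in> sq sm C" shows "LL x = L x"
proof -
  have lin: "LL (a + b) = LL a + LL b" "LL (sm c a) = c * LL a" for a b c
    using LL_herm unfolding herm_on_def lin_on_def by auto
  have "x \<in> sq sm C \<and> LL x = L x"
  proof (rule sqC_induct[OF x])
    show "subspace {x. x \<in> sq sm C \<and> LL x = L x}"
    proof (rule subspaceI)
      show "0 \<in> {x. x \<in> sq sm C \<and> LL x = L x}" using subspace_0[OF sqC_sub] lin(2)[of 0 0] L_0 by simp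
    qed (auto simp: lin L_add L_sm subspace_add[OF sqC_sub] subspace_scale[OF sqC_sub])
    show "st a * b \<in> sq sm C \<and> LL (st a * b) = L (st a * b)" if a: "a \<in> C" and b: "b \<in> C" for a b
      using LL_form[of a b] rho_C1[OF a] rho_C1[OF b] L_pr[OF b a] form_sqC[OF a b] by simp
  qed
  thus ?thesis by simp
qed

lemma KLL_iff: "a \<in> kerL st LL UNIV \<longleftrightarrow> rho a 1 = 0"
proof
  assume a: "a \<in> kerL st LL UNIV"
  show "rho a 1 = 0"
  proof (rule nondeg[OF rho1_Bp], rule ballI)
    fix w assume w: "w \<in> Bp"
    have "LL (st w * a) = 0" using a unfolding kernel_iff by blast
    thus "L (st w * rho a 1) = 0" using LL_form rho_Bp1[OF w] by simp
  qed
next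
  assume "rho a 1 = 0"
  thus "a \<in> kerL st LL UNIV" unfolding kernel_iff using LL_form L_0 by simp
qed

lemma KLL_sub: "subspace (kerL st LL UNIV)"
  using kernel_subspace[OF LL_herm] .

lemma residual_KLL: "a - rho a 1 \<in> kerL st LL UNIV"
  unfolding KLL_iff by (simp add: rho_diff one_Bp rho_Bp1[OF rho1_Bp])

lemma BpKLL: "Bp \<inter> kerL st LL UNIV = {0}"
proof safe
  fix b assume "b \<in> Bp" "b \<in> kerL st LL UNIV"
  thus "b = 0" using KLL_iff rho_Bp1 by auto
qed (auto simp: subspace_0[OF Bp_sub] subspace_0[OF KLL_sub])

lemma LL_ds: "direct_sum Bp (kerL st LL UNIV) UNIV"
proof -
  have "x \<in> setplus Bp (kerL st LL UNIV)" for x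
    using rho1_Bp residual_KLL[of x] unfolding setplus_def by force
  thus ?thesis unfolding direct_sum_def using BpKLL by auto
qed

lemma LL_flat: "flat_ext st LL C UNIV"
proof -
  have "x \<in> setplus C (kerL st LL UNIV)" for x
    using rho1_C residual_KLL[of x] unfolding setplus_def by force
  thus ?thesis unfolding flat_ext_def by auto
qed

lemma projLL: "proj Bp (kerL st LL UNIV) a = rho a 1"
  by (rule proj_unique[OF Bp_sub KLL_sub BpKLL rho1_Bp residual_KLL])

lemma formLL: "v \<in> Bp \<Longrightarrow> w \<in> Bp \<Longrightarrow> form LL st v w = L (st w * v)"
  unfolding form_def using LL_form rho_Bp1 by simp

text \<open>Every hermitian flat extension of L coincides with \<LL>: its kernel contains K and is a left
  ideal, hence contains all residuals a - \<rho>(a) 1.\<close>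
lemma LL_unique:
  assumes h: "herm_on sm st UNIV \<Lambda>" and ext: "\<forall>x\<in>sq sm C. \<Lambda> x = L x"
    and fl: "flat_ext st \<Lambda> C UNIV"
  shows "\<Lambda> = LL"
proof
  fix a
  let ?ker = "kerL st \<Lambda> UNIV"
  have res: "a - rho a 1 \<in> ?ker"
  proof (rule word_induct[where Q = "\<lambda>a. a - rho a 1 \<in> ?ker"])
    show "subspace {a. a - rho a 1 \<in> ?ker}" by (rule residual_subspace[OF kernel_subspace[OF h]])
    show "word_prod gen u - rho (word_prod gen u) 1 \<in> ?ker" if "set u \<subseteq> I" for u
      using that
    proof (induction u)
      case Nil thus ?case using subspace_0[OF kernel_subspace[OF h]] by (simp add: word_prod_Nil rho_1 one_Bp)
    next
      case (Cons i u)
      let ?y = "word_prod gen u"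
      have "gen i * (?y - rho ?y 1) \<in> ?ker" using kernel_left_ideal Cons by auto
      moreover have "(gen i * ?y - rho (gen i * ?y) 1) - gen i * (?y - rho ?y 1) \<in> ?ker"
        using residual_gen Cons.prems K_sub_kernel[OF h ext fl] by auto
      ultimately show ?case using subspace_add[OF kernel_subspace[OF h]] by (fastforce simp: word_prod_Cons)
    qed
  qed
  have lin: "\<Lambda> (x + y) = \<Lambda> x + \<Lambda> y" for x y using h unfolding herm_on_def lin_on_def by blast
  have "\<Lambda> a = \<Lambda> (rho a 1 + (a - rho a 1))" by simp
  also have "\<dots> = \<Lambda> (rho a 1) + \<Lambda> (st 1 * (a - rho a 1))" by (simp only: lin st_1 mult_1)
  also have "\<Lambda> (st 1 * (a - rho a 1)) = 0" using res unfolding kernel_iff by blast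
  also have "\<Lambda> (rho a 1) = L (rho a 1)" using ext C_sqC[OF rho1_C] by blast
  finally show "\<Lambda> a = LL a" unfolding LL_def by simp
qed

lemma LL_rep: "star_rep sm st Bp (form LL st) (\<lambda>a b. proj Bp (kerL st LL UNIV) (a * b))"
proof -
  have e: "proj Bp (kerL st LL UNIV) (a * v) = rho a v" if "v \<in> Bp" for a v
    unfolding projLL using that by (simp add: rho_mult one_Bp rho_Bp1)
  have e1: "proj Bp (kerL st LL UNIV) v = v" if "v \<in> Bp" for v
    using e[of v 1] that rho_1 by simp
  show ?thesis unfolding star_rep_def
    by (simp add: e e1 rho_Bp rho_addv rho_smv rho_add rho_sm rho_mult rho_1 formLL rho_star
        subspace_add[OF Bp_sub] subspace_scale[OF Bp_sub])
qed

lemma LL_pos: "positive_on st C L \<Longrightarrow> positive_on st UNIV LL"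
  unfolding positive_on_def using LL_form rho1_C by simp

lemma LL_posdef:
  assumes pos: "positive_on st C L" and b: "b \<in> Bp" and nz: "b \<noteq> 0"
  shows "0 < form LL st b b"
proof -
  have "0 \<le> L (st b * b)" using pos b Bp_C unfolding positive_on_def by blast
  moreover have "L (st b * b) \<noteq> 0"
  proof
    assume "L (st b * b) = 0"
    hence "\<forall>w\<in>Bp. L (st w * b) = 0" using isotropic_orthogonal[OF pos] b Bp_C by blast
    thus False using nondeg b nz by blast
  qed
  ultimately show ?thesis using formLL b by simp
qed

end

context flat_data
begin

lemma flat_extension_exists:
  obtains \<Lambda> where "herm_on sm st UNIV \<Lambda>" "\<forall>x\<in>sq sm C. \<Lambda> x = L x" "flat_ext st \<Lambda> C UNIV"
proof (cases "\<exists>x\<in>sq sm C. L x \<noteq> 0")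
  case True
  then obtain B' where "subspace B'" "B' \<subseteq> B" "1 \<in> B'" "direct_sum B' K C"
    using exists_complement by blast
  then interpret flat_basis sm st gen I B C L m B'
    by (intro flat_basis.intro[OF flat_data_axioms] flat_basis_axioms.intro)
  show ?thesis using that LL_herm LL_ext LL_flat by blast
next
  case False
  thus ?thesis using that zero_flat_extension[OF subspace_0[OF C_sub]] by auto
qed

lemma flat_extension_unique:
  assumes "herm_on sm st UNIV \<Lambda>" "\<forall>x\<in>sq sm C. \<Lambda> x = L x" "flat_ext st \<Lambda> C UNIV"
    and "herm_on sm st UNIV \<Lambda>'" "\<forall>x\<in>sq sm C. \<Lambda>' x = L x" "flat_ext st \<Lambda>' C UNIV"
  shows "\<Lambda>' = \<Lambda>"
proof (cases "\<exists>x\<in>sq sm C. L x \<noteq> 0")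
  case True
  then obtain B' where "subspace B'" "B' \<subseteq> B" "1 \<in> B'" "direct_sum B' K C"
    using exists_complement by blast
  then interpret flat_basis sm st gen I B C L m B'
    by (intro flat_basis.intro[OF flat_data_axioms] flat_basis_axioms.intro)
  show ?thesis using LL_unique assms by metis
next
  case False
  thus ?thesis using flat_extension_zero_unique assms by (metis (no_types))
qed

lemma complement_properties:
  assumes h: "herm_on sm st UNIV \<Lambda>" and ext: "\<forall>x\<in>sq sm C. \<Lambda> x = L x"
    and fl: "flat_ext st \<Lambda> C UNIV"
    and B': "subspace B'" "B' \<subseteq> B" "1 \<in> B'" "direct_sum B' K C"
  shows "direct_sum B' (kerL st \<Lambda> UNIV) UNIV \<and>
    (\<forall>b\<in>B'. (\<forall>b'\<in>B'. form \<Lambda> st b b' = 0) \<longrightarrow> b = 0) \<and>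
    (\<forall>c\<in>C. proj B' K c = proj B' (kerL st \<Lambda> UNIV) c) \<and>
    star_rep sm st B' (form \<Lambda> st) (\<lambda>a b. proj B' (kerL st \<Lambda> UNIV) (a * b)) \<and>
    (\<forall>a. \<Lambda> a = form \<Lambda> st (proj B' (kerL st \<Lambda> UNIV) (a * 1)) 1) \<and>
    (positive_on st C L \<longrightarrow> positive_on st UNIV \<Lambda> \<and> (\<forall>b\<in>B'. b \<noteq> 0 \<longrightarrow> 0 < form \<Lambda> st b b))"
proof -
  interpret flat_basis sm st gen I B C L m B'
    using B' by (intro flat_basis.intro[OF flat_data_axioms] flat_basis_axioms.intro)
  have "\<Lambda> = LL" using LL_unique[OF h ext fl] .
  moreover have "LL a = form LL st (rho a 1) 1" for a
    using LL_form[of 1 a] rho_Bp1[OF rho1_Bp] unfolding form_def LL_def by simp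
  moreover have "proj B' K c = rho c 1" if "c \<in> C" for c using rho_C1[OF that] pr_def by simp
  ultimately show ?thesis
    using LL_ds nondeg formLL projLL LL_rep LL_pos LL_posdef by auto
qed

end

theorem theorem3p1:
  fixes sm :: "complex \<Rightarrow> 'a::ring_1 \<Rightarrow> 'a"
    and st :: "'a \<Rightarrow> 'a"
    and gen :: "'i \<Rightarrow> 'a"
    and I :: "'i set"
    and B C :: "'a set"
    and L :: "'a \<Rightarrow> complex"
    and m :: nat
  assumes alg: "star_algebra sm st"
    and gen_star: "\<forall>i\<in>I. \<exists>j\<in>I. st (gen i) = gen j"
    and gen_gen: "generates sm gen I"
    and B_sub: "module.subspace sm B" and B_star: "star_inv st B"
    and C_sub: "module.subspace sm C" and C_star: "star_inv st C"
    and BC: "B \<subseteq> C"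
    and B_conn: "connected_to_1 sm gen I B"
    and C_conn: "connected_to_1 sm gen I C"
    and m1: "1 \<le> m"
    and Bm: "(prol sm gen I ^^ m) B \<subseteq> C"
    and delta: "delta_alg sm gen I \<le> enat (2 * m)"
    and L_herm: "herm_on sm st (sq sm C) L"
    and L_flat: "flat_ext st L B C"
  shows "\<exists>\<LL>.
     herm_on sm st UNIV \<LL> \<and> (\<forall>x\<in>sq sm C. \<LL> x = L x) \<and> flat_ext st \<LL> C UNIV \<and>
     (\<forall>\<LL>'. herm_on sm st UNIV \<LL>' \<and> (\<forall>x\<in>sq sm C. \<LL>' x = L x) \<and> flat_ext st \<LL>' C UNIV
            \<longrightarrow> \<LL>' = \<LL>) \<and>
     (\<forall>\<LL>'. herm_on sm st UNIV \<LL>' \<and> (\<forall>x\<in>sq sm C. \<LL>' x = L x)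
            \<longrightarrow> (flat_ext st \<LL>' C UNIV \<longleftrightarrow> flat_ext st \<LL>' B UNIV)) \<and>
     ((\<exists>x\<in>sq sm C. L x \<noteq> 0) \<longrightarrow>
        (\<exists>B'. module.subspace sm B' \<and> B' \<subseteq> B \<and> 1 \<in> B' \<and> direct_sum B' (kerL st L C) C)) \<and>
     (\<forall>B'. module.subspace sm B' \<and> B' \<subseteq> B \<and> 1 \<in> B' \<and> direct_sum B' (kerL st L C) C \<longrightarrow>
        direct_sum B' (kerL st \<LL> UNIV) UNIV \<and>
        (\<forall>b\<in>B'. (\<forall>b'\<in>B'. form \<LL> st b b' = 0) \<longrightarrow> b = 0) \<and>
        (\<forall>c\<in>C. proj B' (kerL st L C) c = proj B' (kerL st \<LL> UNIV) c) \<and>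
        star_rep sm st B' (form \<LL> st) (\<lambda>a b. proj B' (kerL st \<LL> UNIV) (a * b)) \<and>
        (\<forall>a. \<LL> a = form \<LL> st (proj B' (kerL st \<LL> UNIV) (a * 1)) 1) \<and>
        (positive_on st C L \<longrightarrow>
           positive_on st UNIV \<LL> \<and> (\<forall>b\<in>B'. b \<noteq> 0 \<longrightarrow> 0 < form \<LL> st b b)))"
proof -
  have one_B: "1 \<in> B" using B_conn unfolding connected_to_1_def by blast
  have "star_alg sm st" using alg unfolding star_algebra_def star_alg_def star_alg_axioms_def by blast
  hence "flat_data sm st gen I B C L m" using assms one_B
    unfolding flat_data_def flat_data_axioms_def gen_alg_def gen_alg_axioms_def by blast
  then interpret flat_data sm st gen I B C L m .
  obtain \<Lambda> where \<Lambda>: "herm_on sm st UNIV \<Lambda>" "\<forall>x\<in>sq sm C. \<Lambda> x = L x" "flat_ext st \<Lambda> C UNIV"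
    by (rule flat_extension_exists)
  show ?thesis
  proof (intro exI[of _ \<Lambda>] conjI allI impI)
    show "\<Lambda>' = \<Lambda>" if "herm_on sm st UNIV \<Lambda>' \<and> (\<forall>x\<in>sq sm C. \<Lambda>' x = L x) \<and> flat_ext st \<Lambda>' C UNIV"
      for \<Lambda>' using flat_extension_unique[OF \<Lambda>] that by blast
  qed (use \<Lambda> flat_ext_C_iff_B exists_complement complement_properties[OF \<Lambda>] in blast)+
qed

end
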